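(* Let $p\in\mathbb{N}^+$, $s\ge1$, $\varepsilon\in(0,1]$, $T>0$, and let $\psi\in L^\infty([0,T];H^{s+1}(\Omega))$ be the solution of the relativistic NLSE $$i\partial_t\psi+\langle\nabla\rangle\psi+\varepsilon^p\langle\nabla\rangle^{-1}f\big(\tfrac12(\psi+\bar\psi)\big)=0,\quad x\in\Omega,$$ with periodic boundary conditions, and write $\psi(t)=\mathcal{S}_{e,t}(\psi(0))$ for its exact flow. Then for $0<\tau\le1/\varepsilon^p$ and any $t_n\ge0$ with $t_n+\tau\le T$, $$\|\mathcal{S}_\tau(\psi(t_n))-\mathcal{S}_{e,\tau}(\psi(t_n))\|_s\le M_0\varepsilon^p\tau^3,$$ where $M_0$ depends only on $\|\psi\|_{L^\infty([0,T];H^{s+1})}$ (and $s,p,\Omega$), not on $\varepsilon$, $\tau$ or $n$.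
   Context: $\Omega=(a,b)$, $\mu_l=2\pi l/(b-a)$; $\|z\|_s^2=\sum_{l\in\mathbb{Z}}(1+\mu_l^2)^s|\hat z_l|^2$ for $z=\sum_l\hat z_le^{i\mu_l(x-a)}$. $\langle\nabla\rangle$ is the Fourier multiplier by $\sqrt{1+\mu_l^2}$, $\langle\nabla\rangle^{-1}$ its inverse. $f(z)=z^{p+1}$, $G(\phi)=f(\frac12(\phi+\bar\phi))$, $F(\phi)=i\langle\nabla\rangle^{-1}G(\phi)$. Flows: $\varphi^t_T(\psi_0)=e^{it\langle\nabla\rangle}\psi_0$, $\varphi^t_V(\psi_0)=\psi_0+\varepsilon^ptF(\psi_0)$. Strang splitting: $\mathcal{S}_\tau=\varphi_T^{\tau/2}\circ\varphi_V^\tau\circ\varphi_T^{\tau/2}$. *)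

theory Defs
  imports "HOL-Analysis.Analysis"
begin

text \<open>Functions on the periodic interval (a,b) are represented by their Fourier
  coefficient sequences: z = sum_l zhat l * exp(i mu_l (x - a)).\<close>

type_synonym coeffs = "int \<Rightarrow> complex"

definition mu :: "real \<Rightarrow> real \<Rightarrow> int \<Rightarrow> real" where
  "mu a b l = 2 * pi * real_of_int l / (b - a)"

text \<open>The symbol of the Fourier multiplier <nabla>: sqrt(1 + mu_l^2).\<close>
definition jbr :: "real \<Rightarrow> real \<Rightarrow> int \<Rightarrow> real" where
  "jbr a b l = sqrt (1 + (mu a b l)\<^sup>2)"

text \<open>Squared H^s norm, valued in ennreal (infinite if z is not in H^s).\<close>
definition hs_sq :: "real \<Rightarrow> real \<Rightarrow> real \<Rightarrow> coeffs \<Rightarrow> ennreal" where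
  "hs_sq a b s z = (\<Sum>\<^sub>\<infinity> l. ennreal ((1 + (mu a b l)\<^sup>2) powr s * (cmod (z l))\<^sup>2))"

text \<open>Fourier coefficients of a product = convolution of coefficients.\<close>
definition conv :: "coeffs \<Rightarrow> coeffs \<Rightarrow> coeffs" where
  "conv u v = (\<lambda>l. \<Sum>\<^sub>\<infinity> k. u k * v (l - k))"

fun conv_pow :: "coeffs \<Rightarrow> nat \<Rightarrow> coeffs" where
  "conv_pow u 0 = (\<lambda>l. if l = 0 then 1 else 0)"
| "conv_pow u (Suc n) = conv u (conv_pow u n)"

text \<open>Coefficients of (phi + conj phi)/2.\<close>
definition re_part :: "coeffs \<Rightarrow> coeffs" where
  "re_part z = (\<lambda>l. (z l + cnj (z (- l))) / 2)"

text \<open>G(phi) = f((phi + conj phi)/2) with f(z) = z^(p+1).\<close>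
definition Gnl :: "nat \<Rightarrow> coeffs \<Rightarrow> coeffs" where
  "Gnl p z = conv_pow (re_part z) (p + 1)"

definition Fnl :: "real \<Rightarrow> real \<Rightarrow> nat \<Rightarrow> coeffs \<Rightarrow> coeffs" where
  "Fnl a b p z = (\<lambda>l. \<i> * Gnl p z l / complex_of_real (jbr a b l))"

definition phiT :: "real \<Rightarrow> real \<Rightarrow> real \<Rightarrow> coeffs \<Rightarrow> coeffs" where
  "phiT a b t z = (\<lambda>l. exp (\<i> * complex_of_real (t * jbr a b l)) * z l)"

definition phiV :: "real \<Rightarrow> real \<Rightarrow> nat \<Rightarrow> real \<Rightarrow> real \<Rightarrow> coeffs \<Rightarrow> coeffs" where
  "phiV a b p eps t z = (\<lambda>l. z l + complex_of_real (eps ^ p * t) * Fnl a b p z l)"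

definition strang :: "real \<Rightarrow> real \<Rightarrow> nat \<Rightarrow> real \<Rightarrow> real \<Rightarrow> coeffs \<Rightarrow> coeffs" where
  "strang a b p eps tau = phiT a b (tau / 2) \<circ> phiV a b p eps tau \<circ> phiT a b (tau / 2)"

text \<open>psi solves i psi_t + <nabla> psi + eps^p <nabla>^{-1} G(psi) = 0 on [0,T],
  written mode by mode: d/dt psi_l = i (<mu_l> psi_l + eps^p <mu_l>^{-1} G(psi)_l).\<close>
definition is_solution :: "real \<Rightarrow> real \<Rightarrow> nat \<Rightarrow> real \<Rightarrow> real \<Rightarrow> (real \<Rightarrow> coeffs) \<Rightarrow> bool" where
  "is_solution a b p eps T psi \<longleftrightarrow>
     (\<forall>l. \<forall>t\<in>{0..T}.
        ((\<lambda>t'. psi t' l) has_vector_derivative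
           (\<i> * (complex_of_real (jbr a b l) * psi t l
                 + complex_of_real (eps ^ p / jbr a b l) * Gnl p (psi t) l)))
        (at t within {0..T}))"

end

theory Submission
  imports Defs
begin

(*
  Per Fourier mode l, the twisted solution W(r) = e^{-i (r - t_n) <mu_l>} psi_l(r) has derivative
  i eps^p <mu_l>^{-1} e^{-i (r - t_n) <mu_l>} G(psi(r))_l, and one Strang step is exactly the
  midpoint rule for this integral with psi(t_n + sigma) replaced by the free flow
  phi_T^sigma psi(t_n). The local error thus has two parts.

  The quadrature error is controlled by the second sigma-difference of
  e^{-i sigma <mu_l>} G(phi_T^sigma psi(t_n))_l; each sigma-derivative costs a factor <mu_l>,
  which is paid for by the H^{s+1} bound on psi because G is a convolution power of the
  coefficients. These estimates are done on nonnegative majorants in [0, infinity], where Young's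
  inequality and the algebra property of weighted l^2 norms need no summability side conditions.

  The freezing error compares G(psi(t_n + sigma)) with G(phi_T^sigma psi(t_n)). Duhamel alone gives
  order eps^p sigma, but G depends only on (psi + conj psi)/2: in the derivative of this real part
  the imaginary factor i and the Hermitian symmetry G_{-k} = conj G_k cancel the first-order terms,
  up to e^{i theta} - e^{-i theta} = O(sigma <mu_k>). This yields eps^p sigma^2, and altogether a
  local error O(eps^p tau^3) uniformly in eps <= 1.
*)

section \<open>Nonnegative sums over the integers\<close>

abbreviation esum :: "(int \<Rightarrow> ennreal) \<Rightarrow> ennreal" where
  "esum g \<equiv> (\<integral>\<^sup>+x. g x \<partial>count_space UNIV)"

lemma esum_eq_SUP_finite: "esum g = (SUP F\<in>{F. finite F}. sum g F)"
proof (rule antisym)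
  have "esum g = (\<integral>\<^sup>+n. g (int_decode n) \<partial>count_space UNIV)"
    using nn_integral_bij_count_space[OF bij_int_decode, of g] by simp
  also have "\<dots> = (\<Sum>n. g (int_decode n))" by (rule nn_integral_count_space_nat)
  also have "\<dots> = (SUP n. sum (\<lambda>i. g (int_decode i)) {..<n})" by (rule suminf_eq_SUP)
  also have "\<dots> \<le> (SUP F\<in>{F. finite F}. sum g F)"
  proof (rule SUP_least)
    fix n
    have "sum (\<lambda>i. g (int_decode i)) {..<n} = sum g (int_decode ` {..<n})"
      by (simp add: sum.reindex inj_int_decode)
    also have "\<dots> \<le> (SUP F\<in>{F. finite F}. sum g F)"
      by (rule SUP_upper) auto
    finally show "sum (\<lambda>i. g (int_decode i)) {..<n} \<le> (SUP F\<in>{F. finite F}. sum g F)" .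
  qed
  finally show "esum g \<le> (SUP F\<in>{F. finite F}. sum g F)" .
next
  show "(SUP F\<in>{F. finite F}. sum g F) \<le> esum g"
  proof (rule SUP_least)
    fix F :: "int set" assume "F \<in> {F. finite F}"
    then have fin: "finite F" by simp
    have "sum g F = (\<integral>\<^sup>+x. g x \<partial>count_space F)"
      using nn_integral_count_space_finite[OF fin] by simp
    also have "\<dots> = (\<integral>\<^sup>+x. g x * indicator F x \<partial>count_space UNIV)"
      by (simp add: nn_integral_count_space_indicator)
    also have "\<dots> \<le> esum g"
      by (intro nn_integral_mono) (auto simp: indicator_def)
    finally show "sum g F \<le> esum g" .
  qed
qed

lemma infsum_eq_esum: "infsum g UNIV = esum g"
  unfolding esum_eq_SUP_finite by (subst nonneg_infsum_complete) auto

lemma sum_le_esum: "finite F \<Longrightarrow> sum g F \<le> esum g"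
  unfolding esum_eq_SUP_finite by (rule SUP_upper) auto

lemma esum_cmult: "esum (\<lambda>k. c * f k) = c * esum f"
  by (rule nn_integral_cmult) simp

lemma esum_cmult_right: "esum (\<lambda>k. f k * c) = esum f * c"
  using esum_cmult[of c f] by (simp add: mult.commute)

lemma esum_add: "esum (\<lambda>k. f k + g k) = esum f + esum g"
  by (rule nn_integral_add) auto

lemma esum_mono: "(\<And>k. f k \<le> g k) \<Longrightarrow> esum f \<le> esum g"
  by (rule nn_integral_mono) simp

lemma esum_swap: "esum (\<lambda>k. esum (\<lambda>m. F k m)) = esum (\<lambda>m. esum (\<lambda>k. F k m))"
  by (rule nn_integral_count_space_nn_integral[symmetric]) auto

lemma esum_shift: "esum (\<lambda>l. y (l - k)) = esum y"
proof -
  have "bij_betw (\<lambda>l. l - k) UNIV (UNIV::int set)"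
    by (rule bij_betwI[where g="\<lambda>l. l + k"]) auto
  then show ?thesis using nn_integral_bij_count_space[of "\<lambda>l. l - k" UNIV UNIV y] by simp
qed

lemma esum_reflect: "esum (\<lambda>k. y (l - k)) = esum y"
proof -
  have "bij_betw (\<lambda>k. l - k) UNIV (UNIV::int set)"
    by (rule bij_betwI[where g="\<lambda>k. l - k"]) auto
  then show ?thesis using nn_integral_bij_count_space[of "\<lambda>k. l - k" UNIV UNIV y] by simp
qed

lemma esum_neg: "esum (\<lambda>k. y (- k)) = esum y"
proof -
  have "bij_betw (\<lambda>k. - k) UNIV (UNIV::int set)"
    by (rule bij_betwI[where g="\<lambda>k. - k"]) auto
  then show ?thesis using nn_integral_bij_count_space[of "\<lambda>k. - k" UNIV UNIV y] by simp
qed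

lemma esum_square: "(esum f)\<^sup>2 = esum (\<lambda>k. esum (\<lambda>m. f k * f m))"
proof -
  have "esum (\<lambda>k. esum (\<lambda>m. f k * f m)) = esum (\<lambda>k. f k * esum f)"
    by (simp add: esum_cmult)
  also have "\<dots> = esum f * esum f" by (rule esum_cmult_right)
  finally show ?thesis by (simp add: power2_eq_square)
qed

lemma summable_on_of_esum_finite:
  fixes f :: "int \<Rightarrow> complex"
  assumes "esum (\<lambda>k. ennreal (norm (f k))) < \<infinity>"
  shows "f summable_on UNIV" and "(\<lambda>k. norm (f k)) summable_on UNIV"
    and "ennreal (infsum (\<lambda>k. norm (f k)) UNIV) = esum (\<lambda>k. ennreal (norm (f k)))"
proof -
  obtain M where M: "esum (\<lambda>k. ennreal (norm (f k))) = ennreal M" "M \<ge> 0"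
    using assms by (cases "esum (\<lambda>k. ennreal (norm (f k)))") auto
  have bdd: "bdd_above (sum (\<lambda>x. norm (f x)) ` {F. F\<subseteq>UNIV \<and> finite F})"
  proof (rule bdd_aboveI2)
    fix F :: "int set" assume "F \<in> {F. F\<subseteq>UNIV \<and> finite F}"
    then have "ennreal (sum (\<lambda>x. norm (f x)) F) \<le> ennreal M"
      using sum_le_esum[of F "\<lambda>k. ennreal (norm (f k))"] M
      by (simp add: sum_ennreal)
    then show "sum (\<lambda>x. norm (f x)) F \<le> M" using M(2) by simp
  qed
  show abs: "(\<lambda>k. norm (f k)) summable_on UNIV" using bdd abs_summable_iff_bdd_above by blast
  then show "f summable_on UNIV" using abs_summable_summable by blast
  have "ennreal (infsum (\<lambda>k. norm (f k)) UNIV) = (SUP F\<in>{F. finite F \<and> F\<subseteq>UNIV}. ennreal (sum (\<lambda>k. norm (f k)) F))"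
    by (rule infsum_nonneg_is_SUPREMUM_ennreal) (use abs in auto)
  also have "\<dots> = esum (\<lambda>k. ennreal (norm (f k)))"
    unfolding esum_eq_SUP_finite by (simp add: sum_ennreal)
  finally show "ennreal (infsum (\<lambda>k. norm (f k)) UNIV) = esum (\<lambda>k. ennreal (norm (f k)))" .
qed

lemma norm_infsum_le_esum:
  fixes f :: "int \<Rightarrow> complex"
  shows "ennreal (norm (infsum f UNIV)) \<le> esum (\<lambda>k. ennreal (norm (f k)))"
proof (cases "esum (\<lambda>k. ennreal (norm (f k))) < \<infinity>")
  case True
  have "norm (infsum f UNIV) \<le> infsum (\<lambda>k. norm (f k)) UNIV"
    by (rule norm_infsum_bound) (rule summable_on_of_esum_finite(2)[OF True])
  then have "ennreal (norm (infsum f UNIV)) \<le> ennreal (infsum (\<lambda>k. norm (f k)) UNIV)"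
    by (rule ennreal_leI)
  then show ?thesis using summable_on_of_esum_finite(3)[OF True] by simp
next
  case False then have "esum (\<lambda>k. ennreal (norm (f k))) = top" by (simp add: not_less top_unique)
  then show ?thesis by simp
qed

lemma norm_infsum_le_esum_of_le:
  fixes f :: "int \<Rightarrow> complex"
  assumes "\<And>k. ennreal (norm (f k)) \<le> g k"
  shows "ennreal (norm (infsum f UNIV)) \<le> esum g"
proof -
  have "esum (\<lambda>k. ennreal (norm (f k))) \<le> esum g" using assms by (rule esum_mono)
  then show ?thesis using norm_infsum_le_esum[of f] by (rule order_trans[rotated])
qed

lemma infsum_diff:
  fixes f g :: "'a \<Rightarrow> 'b::{topological_ab_group_add, t2_space}"
  assumes "f summable_on A" "g summable_on A"
  shows "infsum (\<lambda>x. f x - g x) A = infsum f A - infsum g A"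
proof -
  have "(\<lambda>x. - g x) summable_on A" using assms(2) summable_on_uminus by blast
  then have "infsum (\<lambda>x. f x + - g x) A = infsum f A + infsum (\<lambda>x. - g x) A"
    using infsum_add[OF assms(1)] by blast
  then show ?thesis by (simp add: infsum_uminus)
qed

lemma ennreal_two_mult_le_squares: "2 * u * v \<le> u\<^sup>2 + (v::ennreal)\<^sup>2"
proof (cases "u = top \<or> v = top")
  case True
  then have "u\<^sup>2 + v\<^sup>2 = top" by (auto simp: power2_eq_square)
  then show ?thesis by (simp only:) simp
next
  case False
  then obtain r s where rs: "u = ennreal r" "v = ennreal s" "0 \<le> r" "0 \<le> s"
    by (metis ennreal_cases)
  have "2 * r * s \<le> r\<^sup>2 + s\<^sup>2" using sum_squares_bound[of r s] by (simp add: power2_eq_square)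
  then have "ennreal (2 * r * s) \<le> ennreal (r\<^sup>2 + s\<^sup>2)" by (rule ennreal_leI)
  moreover have "ennreal (2 * r * s) = 2 * u * v" using rs by (simp add: ennreal_mult)
  moreover have "ennreal (r\<^sup>2 + s\<^sup>2) = u\<^sup>2 + v\<^sup>2" using rs by (simp add: ennreal_plus ennreal_power)
  ultimately show ?thesis by simp
qed

lemma ennreal_sum_sq_le: "(u + v)\<^sup>2 \<le> 2 * u\<^sup>2 + 2 * (v::ennreal)\<^sup>2"
proof -
  have "(u + v)\<^sup>2 = u\<^sup>2 + v\<^sup>2 + 2 * u * v" by (rule power2_sum)
  also have "\<dots> \<le> u\<^sup>2 + v\<^sup>2 + (u\<^sup>2 + v\<^sup>2)" by (intro add_left_mono ennreal_two_mult_le_squares)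
  finally show ?thesis by (simp add: algebra_simps mult_2)
qed

lemma ennreal_le_mult_of_le: "x \<le> y * z \<Longrightarrow> 0 \<le> y \<Longrightarrow> 0 \<le> z \<Longrightarrow> ennreal x \<le> ennreal y * ennreal z"
  by (simp add: ennreal_mult[symmetric] ennreal_leI)

lemma ennreal_norm_mult: "ennreal (norm ((x::complex) * y)) = ennreal (norm x) * ennreal (norm y)"
  by (simp add: norm_mult ennreal_mult)

lemma ennreal_norm_add_le: "ennreal (norm ((p::complex) + q)) \<le> ennreal (norm p) + ennreal (norm q)"
  by (simp add: ennreal_plus[symmetric] ennreal_leI norm_triangle_ineq del: ennreal_plus)

lemma ennreal_norm_add4_le:
  "ennreal (norm ((p::complex) + q + r + s)) \<le> ennreal (norm p) + ennreal (norm q) + ennreal (norm r) + ennreal (norm s)"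
  by (meson add_mono ennreal_norm_add_le order_refl order_trans)

lemma ennreal_norm_product_difference_le:
  fixes R1 R0 P1 P0 :: complex
  assumes "ennreal (norm R0) \<le> x" "ennreal (norm P1) \<le> A"
    and "ennreal (norm (R1 - R0)) \<le> e * y" "ennreal (norm (P1 - P0)) \<le> e * B"
  shows "ennreal (norm (R1 * P1 - R0 * P0)) \<le> e * (y * A + x * B)"
proof -
  have "R1 * P1 - R0 * P0 = (R1 - R0) * P1 + R0 * (P1 - P0)"
    by (simp add: algebra_simps)
  then have "ennreal (norm (R1 * P1 - R0 * P0))
      \<le> ennreal (norm ((R1 - R0) * P1)) + ennreal (norm (R0 * (P1 - P0)))"
    by (simp only: ennreal_norm_add_le)
  also have "\<dots> = ennreal (norm (R1 - R0)) * ennreal (norm P1) + ennreal (norm R0) * ennreal (norm (P1 - P0))"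
    by (simp only: ennreal_norm_mult)
  also have "\<dots> \<le> (e * y) * A + x * (e * B)"
    using assms by (intro add_mono mult_mono) auto
  finally show ?thesis by (simp add: algebra_simps)
qed

lemma ennreal_norm_product_second_difference_le:
  fixes Rp Rm R0 Pp Pm P0 :: complex
  assumes "ennreal (norm R0) \<le> x" "ennreal (norm P0) \<le> A"
    and "ennreal (norm (Rp - R0)) \<le> e * y" "ennreal (norm (Rm - R0)) \<le> e * y"
    and "ennreal (norm (Pp - P0)) \<le> e * B" "ennreal (norm (Pm - P0)) \<le> e * B"
    and "ennreal (norm (Rp + Rm - 2 * R0)) \<le> e\<^sup>2 * z" "ennreal (norm (Pp + Pm - 2 * P0)) \<le> e\<^sup>2 * C"
  shows "ennreal (norm (Rp * Pp + Rm * Pm - 2 * (R0 * P0))) \<le> e\<^sup>2 * (z * A + x * C + 2 * (y * B))"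
proof -
  have "Rp * Pp + Rm * Pm - 2 * (R0 * P0) = (Rp + Rm - 2 * R0) * P0 + R0 * (Pp + Pm - 2 * P0)
      + (Rp - R0) * (Pp - P0) + (Rm - R0) * (Pm - P0)"
    by (simp add: algebra_simps)
  then have "ennreal (norm (Rp * Pp + Rm * Pm - 2 * (R0 * P0)))
      \<le> ennreal (norm (Rp + Rm - 2 * R0)) * ennreal (norm P0) + ennreal (norm R0) * ennreal (norm (Pp + Pm - 2 * P0))
        + ennreal (norm (Rp - R0)) * ennreal (norm (Pp - P0)) + ennreal (norm (Rm - R0)) * ennreal (norm (Pm - P0))"
    unfolding ennreal_norm_mult[symmetric] by (simp only: ennreal_norm_add4_le)
  also have "\<dots> \<le> (e\<^sup>2 * z) * A + x * (e\<^sup>2 * C) + (e * y) * (e * B) + (e * y) * (e * B)"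
    using assms by (intro add_mono mult_mono) auto
  also have "\<dots> = e\<^sup>2 * (z * A + x * C + 2 * (y * B))"
    by (simp add: power2_eq_square distrib_left mult_2 mult_2_right mult_ac add_ac)
  finally show ?thesis .
qed

section \<open>The Japanese bracket\<close>

lemma mu_add: "mu a b (k + m) = mu a b k + mu a b m"
  unfolding mu_def by (simp add: add_divide_distrib distrib_left)

lemma mu_neg: "mu a b (- k) = - mu a b k"
  unfolding mu_def by simp

lemma jbr_ge1: "1 \<le> jbr a b l"
  unfolding jbr_def by simp

lemma jbr_pos: "0 < jbr a b l"
  using jbr_ge1[of a b l] by linarith

lemma jbr_neq0[simp]: "jbr a b k \<noteq> 0"
  using jbr_pos[of a b k] by linarith

lemma jbr_abs[simp]: "\<bar>jbr a b k\<bar> = jbr a b k"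
  using jbr_pos[of a b k] by simp

lemma jbr_neg: "jbr a b (- l) = jbr a b l"
  unfolding jbr_def by (simp add: mu_neg)

lemma jbr_0: "jbr a b 0 = 1"
  unfolding jbr_def mu_def by simp

lemma jbr_sq: "(jbr a b l)\<^sup>2 = 1 + (mu a b l)\<^sup>2"
  unfolding jbr_def by simp

lemma sqrt_one_plus_sq_subadd: "sqrt (1 + (x+y)\<^sup>2) \<le> sqrt (1 + x\<^sup>2) + sqrt (1 + (y::real)\<^sup>2)"
proof (rule real_le_lsqrt)
  show "0 \<le> sqrt (1 + x\<^sup>2) + sqrt (1 + y\<^sup>2)" by simp
  have "sqrt (1 + x\<^sup>2) * sqrt (1 + y\<^sup>2) = sqrt ((1 + x\<^sup>2) * (1 + y\<^sup>2))"
    by (simp add: real_sqrt_mult)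
  also have "\<dots> \<ge> sqrt ((x*y)\<^sup>2)"
    by (intro real_sqrt_le_mono) (auto simp: algebra_simps power2_eq_square)
  finally have h: "sqrt (1 + x\<^sup>2) * sqrt (1 + y\<^sup>2) \<ge> x * y"
    by (metis abs_ge_self order_trans real_sqrt_abs)
  have "(sqrt (1 + x\<^sup>2) + sqrt (1 + y\<^sup>2))\<^sup>2 = 2 + x\<^sup>2 + y\<^sup>2 + 2 * (sqrt (1 + x\<^sup>2) * sqrt (1 + y\<^sup>2))"
    by (simp add: power2_eq_square algebra_simps)
  then show "1 + (x + y)\<^sup>2 \<le> (sqrt (1 + x\<^sup>2) + sqrt (1 + y\<^sup>2))\<^sup>2"
    using h by (simp add: power2_eq_square algebra_simps)
qed

lemma jbr_triangle: "jbr a b l \<le> jbr a b k + jbr a b (l - k)"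
proof -
  have "mu a b l = mu a b k + mu a b (l - k)" using mu_add[of a b k "l - k"] by simp
  then show ?thesis unfolding jbr_def using sqrt_one_plus_sq_subadd by metis
qed

lemma jbr_powr_le_split:
  assumes "0 \<le> r"
  shows "jbr a b l powr r \<le> 2 powr r * (jbr a b k powr r + jbr a b (l - k) powr r)"
proof -
  let ?x = "jbr a b k" and ?y = "jbr a b (l - k)"
  have "jbr a b l \<le> 2 * max ?x ?y" using jbr_triangle[of a b l k] by linarith
  then have "jbr a b l powr r \<le> (2 * max ?x ?y) powr r"
    using assms by (intro powr_mono2) (auto simp: less_imp_le[OF jbr_pos])
  also have "\<dots> = 2 powr r * max ?x ?y powr r"
    using jbr_pos by (simp add: powr_mult)
  also have "max ?x ?y powr r \<le> ?x powr r + ?y powr r"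
    by (cases "?x \<le> ?y") (auto simp: max_def)
  finally show ?thesis by (simp add: mult_left_mono)
qed

lemma jbr_neg_powr_mult_le:
  assumes "0 \<le> t"
  shows "jbr a b k powr (-t) * jbr a b (l - k) powr (-t)
     \<le> 2 powr t * jbr a b l powr (-t) * (jbr a b k powr (-t) + jbr a b (l - k) powr (-t))"
proof -
  let ?x = "jbr a b k" and ?y = "jbr a b (l - k)" and ?z = "jbr a b l"
  have px: "?x > 0" "?y > 0" "?z > 0" using jbr_pos by auto
  have s: "?z powr t \<le> 2 powr t * (?x powr t + ?y powr t)" by (rule jbr_powr_le_split[OF assms])
  have "?x powr (-t) * ?y powr (-t) = ?z powr (-t) * (?z powr t * (?x powr (-t) * ?y powr (-t)))"
    using px by (simp add: powr_minus field_simps)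
  also have "\<dots> \<le> ?z powr (-t) * ((2 powr t * (?x powr t + ?y powr t)) * (?x powr (-t) * ?y powr (-t)))"
    using s by (intro mult_left_mono mult_right_mono) auto
  also have "\<dots> = 2 powr t * ?z powr (-t) * (?x powr (-t) + ?y powr (-t))"
    using px by (simp add: powr_minus field_simps)
  finally show ?thesis .
qed

lemma int_decode_growth: "(real n + 1)\<^sup>2 \<le> 8 * (1 + (real_of_int (int_decode n))\<^sup>2)"
proof -
  have h: "\<bar>real_of_int (int_decode n)\<bar> \<ge> (real n - 1) / 2"
  proof (cases "even n")
    case True
    then obtain m where m: "n = 2 * m" by (elim evenE)
    then have "int_decode n = int m" unfolding int_decode_def sum_decode_def by simp
    then show ?thesis using m by simp
  next
    case False
    then obtain m where m: "n = 2 * m + 1" by (elim oddE)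
    then have "int_decode n = - int m - 1" unfolding int_decode_def sum_decode_def by simp
    then show ?thesis using m by simp
  qed
  show ?thesis
  proof (cases "real n \<ge> 1")
    case True
    then have "((real n - 1) / 2)\<^sup>2 \<le> (real_of_int (int_decode n))\<^sup>2"
      using h by (metis abs_le_square_iff abs_of_nonneg diff_ge_0_iff_ge divide_nonneg_nonneg zero_le_numeral)
    moreover have "0 \<le> (real n - 3)\<^sup>2" by simp
    ultimately show ?thesis by (simp add: power2_eq_square algebra_simps)
  next
    case False
    then have "n = 0" by simp
    then show ?thesis by simp
  qed
qed

definition jsum :: "real \<Rightarrow> real \<Rightarrow> ennreal" where
  "jsum a b = esum (\<lambda>l. ennreal (1 / (jbr a b l)\<^sup>2))"

lemma esum_inverse_one_plus_sq_finite: "esum (\<lambda>l. ennreal (1 / (1 + (real_of_int l)\<^sup>2))) < \<infinity>"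
proof -
  have "esum (\<lambda>l. ennreal (1 / (1 + (real_of_int l)\<^sup>2)))
      = (\<Sum>n. ennreal (1 / (1 + (real_of_int (int_decode n))\<^sup>2)))"
    using nn_integral_bij_count_space[OF bij_int_decode, of "\<lambda>l. ennreal (1 / (1 + (real_of_int l)\<^sup>2))"]
    by (simp add: nn_integral_count_space_nat)
  also have "\<dots> \<le> (\<Sum>n. ennreal (8 * inverse (real (Suc n) ^ 2)))"
  proof (intro suminf_le ennreal_leI allI)
    fix n
    have "1 / (1 + (real_of_int (int_decode n))\<^sup>2) \<le> 1 / ((real n + 1)\<^sup>2 / 8)"
      using int_decode_growth[of n] by (intro divide_left_mono) (auto intro!: mult_pos_pos add_pos_nonneg)
    then show "1 / (1 + (real_of_int (int_decode n))\<^sup>2) \<le> 8 * inverse (real (Suc n) ^ 2)"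
      by (simp add: field_simps add_pos_nonneg)
  qed auto
  also have "\<dots> = ennreal (\<Sum>n. 8 * inverse (real (Suc n) ^ 2))"
  proof (rule suminf_ennreal2)
    have "summable (\<lambda>n. inverse (real n ^ 2))"
      by (rule inverse_power_summable) simp
    then show "summable (\<lambda>n. 8 * inverse (real (Suc n) ^ 2))"
      by (subst (asm) summable_Suc_iff[symmetric]) (rule summable_mult)
  qed auto
  finally show ?thesis by (simp add: le_less_trans)
qed

lemma jsum_finite:
  assumes "a < b"
  shows "esum (\<lambda>l. ennreal (1 / (jbr a b l)\<^sup>2)) < \<infinity>"
proof -
  define c where "c = 2 * pi / (b - a)"
  have c: "c > 0" using assms by (simp add: c_def)
  define C where "C = 1 + 1 / c\<^sup>2"
  have C: "C \<ge> 1" "C * c\<^sup>2 \<ge> 1" using c by (auto simp: C_def field_simps)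
  have "1 / (jbr a b l)\<^sup>2 \<le> C * (1 / (1 + (real_of_int l)\<^sup>2))" for l
  proof -
    have "(real_of_int l)\<^sup>2 \<le> (C * c\<^sup>2) * (real_of_int l)\<^sup>2"
      using C(2) by (simp add: mult_le_cancel_right1)
    then have "1 + (real_of_int l)\<^sup>2 \<le> C * (1 + c\<^sup>2 * (real_of_int l)\<^sup>2)"
      using C(1) by (simp add: distrib_left mult.assoc)
    moreover have "(jbr a b l)\<^sup>2 = 1 + c\<^sup>2 * (real_of_int l)\<^sup>2"
      by (simp add: jbr_sq mu_def c_def power_mult_distrib power_divide)
    moreover have "0 < 1 + (real_of_int l)\<^sup>2" by (simp add: add_pos_nonneg)
    ultimately have "C / (C * (1 + c\<^sup>2 * (real_of_int l)\<^sup>2)) \<le> C / (1 + (real_of_int l)\<^sup>2)"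
      using C by (intro divide_left_mono) auto
    then show ?thesis using C \<open>(jbr a b l)\<^sup>2 = _\<close> by simp
  qed
  then have "esum (\<lambda>l. ennreal (1 / (jbr a b l)\<^sup>2)) \<le> esum (\<lambda>l. ennreal C * ennreal (1 / (1 + (real_of_int l)\<^sup>2)))"
    using C by (intro esum_mono) (simp add: ennreal_le_mult_of_le)
  also have "\<dots> < \<infinity>"
    using esum_inverse_one_plus_sq_finite by (simp add: esum_cmult ennreal_mult_less_top)
  finally show ?thesis .
qed

section \<open>Weighted \<open>\<ell>\<^sup>2\<close> norms of majorants\<close>

definition econv :: "(int \<Rightarrow> ennreal) \<Rightarrow> (int \<Rightarrow> ennreal) \<Rightarrow> int \<Rightarrow> ennreal" where
  "econv x y l = esum (\<lambda>k. x k * y (l - k))"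

lemma econv_commute: "econv x y = econv y x"
proof
  fix l
  have "econv x y l = esum (\<lambda>k. (\<lambda>k. y k * x (l - k)) (l - k))"
    unfolding econv_def by (simp add: mult.commute)
  also have "\<dots> = econv y x l" unfolding econv_def by (rule esum_reflect)
  finally show "econv x y l = econv y x l" .
qed

text \<open>Young's inequality \<open>\<ell>\<^sup>2 * \<ell>\<^sup>1 \<subseteq> \<ell>\<^sup>2\<close>: expand the square as a triple sum and apply
  \<open>2 x\<^sub>k x\<^sub>m \<le> x\<^sub>k\<^sup>2 + x\<^sub>m\<^sup>2\<close> termwise, which avoids any subtraction in \<open>[0, \<infinity>]\<close>.\<close>

lemma young_l2_l1:
  "esum (\<lambda>l. (econv x y l)\<^sup>2) \<le> esum (\<lambda>k. (x k)\<^sup>2) * (esum y)\<^sup>2"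
proof -
  define T where "T = esum (\<lambda>l. esum (\<lambda>k. esum (\<lambda>m. (x k)\<^sup>2 * y (l - k) * y (l - m))))"
  have T: "T = esum (\<lambda>k. (x k)\<^sup>2) * (esum y)\<^sup>2"
  proof -
    have "T = esum (\<lambda>l. esum (\<lambda>k. (x k)\<^sup>2 * y (l - k) * esum y))"
      unfolding T_def by (simp add: esum_cmult esum_reflect)
    also have "\<dots> = esum (\<lambda>k. esum (\<lambda>l. (x k)\<^sup>2 * esum y * y (l - k)))"
      by (subst esum_swap) (simp add: mult_ac)
    also have "\<dots> = esum (\<lambda>k. (x k)\<^sup>2 * esum y * esum y)"
      by (simp add: esum_cmult esum_shift)
    also have "\<dots> = esum (\<lambda>k. (x k)\<^sup>2 * (esum y)\<^sup>2)"
      by (simp only: mult.assoc power2_eq_square[of "esum y"])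
    also have "\<dots> = esum (\<lambda>k. (x k)\<^sup>2) * (esum y)\<^sup>2"
      by (rule esum_cmult_right)
    finally show ?thesis .
  qed
  have T': "esum (\<lambda>l. esum (\<lambda>k. esum (\<lambda>m. (x m)\<^sup>2 * y (l - k) * y (l - m)))) = T"
    unfolding T_def by (subst esum_swap) (simp add: mult_ac)
  have "2 * esum (\<lambda>l. (econv x y l)\<^sup>2) = esum (\<lambda>l. esum (\<lambda>k. esum (\<lambda>m. 2 * (x k * y (l - k)) * (x m * y (l - m)))))"
    unfolding econv_def esum_square by (simp add: esum_cmult mult.assoc)
  also have "\<dots> \<le> esum (\<lambda>l. esum (\<lambda>k. esum (\<lambda>m. (x k)\<^sup>2 * y (l - k) * y (l - m) + (x m)\<^sup>2 * y (l - k) * y (l - m))))"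
  proof (intro esum_mono)
    fix l k m
    have "2 * (x k * y (l - k)) * (x m * y (l - m)) = (2 * x k * x m) * (y (l - k) * y (l - m))"
      by (simp add: mult_ac)
    also have "\<dots> \<le> ((x k)\<^sup>2 + (x m)\<^sup>2) * (y (l - k) * y (l - m))"
      by (intro mult_right_mono ennreal_two_mult_le_squares) simp
    finally show "2 * (x k * y (l - k)) * (x m * y (l - m)) \<le> (x k)\<^sup>2 * y (l - k) * y (l - m) + (x m)\<^sup>2 * y (l - k) * y (l - m)"
      by (simp add: algebra_simps)
  qed
  also have "\<dots> = T + T"
    using T' unfolding T_def by (simp add: esum_add)
  finally have "2 * esum (\<lambda>l. (econv x y l)\<^sup>2) \<le> 2 * T" by (simp add: mult_2)
  then have "esum (\<lambda>l. (econv x y l)\<^sup>2) \<le> T"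
    by (subst (asm) ennreal_mult_le_mult_iff) auto
  then show ?thesis using T by simp
qed

definition jweight :: "real \<Rightarrow> real \<Rightarrow> real \<Rightarrow> (int \<Rightarrow> ennreal) \<Rightarrow> int \<Rightarrow> ennreal" where
  "jweight a b r x k = ennreal (jbr a b k powr r) * x k"

definition sob_sq :: "real \<Rightarrow> real \<Rightarrow> real \<Rightarrow> (int \<Rightarrow> ennreal) \<Rightarrow> ennreal" where
  "sob_sq a b r x = esum (\<lambda>k. (jweight a b r x k)\<^sup>2)"

lemma ennreal_ratio_sq: "0 < k \<Longrightarrow> 0 < m \<Longrightarrow> (ennreal (k / m))\<^sup>2 = ennreal (1 / m\<^sup>2) * (ennreal k)\<^sup>2"
proof -
  assume "0 < k" "0 < m"
  have "(k/m)\<^sup>2 = 1/m\<^sup>2 * k\<^sup>2" by (simp add: power_divide)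
  moreover have "ennreal (1/m\<^sup>2) * ennreal (k\<^sup>2) = ennreal (1/m\<^sup>2 * k\<^sup>2)" by (rule ennreal_mult[symmetric]) auto
  ultimately have "ennreal ((k/m)\<^sup>2) = ennreal (1/m\<^sup>2) * ennreal (k\<^sup>2)" by simp
  then show ?thesis using \<open>0 < k\<close> \<open>0 < m\<close> by (simp add: ennreal_power)
qed

lemma jweight_0[simp]: "jweight a b 0 x = x"
  unfolding jweight_def by (simp add: jbr_pos)

lemma jweight_1: "jweight a b 1 x k = ennreal (jbr a b k) * x k"
  unfolding jweight_def by (simp add: less_imp_le[OF jbr_pos])

lemma jweight_2: "jweight a b 2 x k = ennreal ((jbr a b k)\<^sup>2) * x k"
  unfolding jweight_def using powr_realpow[OF jbr_pos, of a b k 2] by simp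

lemma jweight_jweight: "jweight a b r (jweight a b r' x) = jweight a b (r + r') x"
  unfolding jweight_def by (auto simp: powr_add mult.assoc ennreal_mult' jbr_pos)

lemma sob_sq_jweight: "sob_sq a b r (jweight a b r' x) = sob_sq a b (r + r') x"
  unfolding sob_sq_def by (simp add: jweight_jweight)

lemma sob_sq_0: "sob_sq a b 0 x = esum (\<lambda>k. (x k)\<^sup>2)"
  unfolding sob_sq_def by simp

lemma jweight_mono_exp: "r \<le> r' \<Longrightarrow> jweight a b r x k \<le> jweight a b r' x k"
  unfolding jweight_def using jbr_ge1[of a b k]
  by (intro mult_right_mono ennreal_leI powr_mono) auto

lemma sob_sq_mono_exp: "r \<le> r' \<Longrightarrow> sob_sq a b r x \<le> sob_sq a b r' x"
  unfolding sob_sq_def by (intro esum_mono power_mono jweight_mono_exp) auto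

lemma sob_sq_add_le: "sob_sq a b r (\<lambda>k. x k + y k) \<le> 2 * sob_sq a b r x + 2 * sob_sq a b r y"
proof -
  have "sob_sq a b r (\<lambda>k. x k + y k) = esum (\<lambda>k. (jweight a b r x k + jweight a b r y k)\<^sup>2)"
    unfolding sob_sq_def jweight_def by (simp add: distrib_left)
  also have "\<dots> \<le> esum (\<lambda>k. 2 * (jweight a b r x k)\<^sup>2 + 2 * (jweight a b r y k)\<^sup>2)"
    by (intro esum_mono ennreal_sum_sq_le)
  also have "\<dots> = 2 * sob_sq a b r x + 2 * sob_sq a b r y"
    unfolding sob_sq_def by (simp add: esum_add esum_cmult)
  finally show ?thesis .
qed

lemma sob_sq_cmult: "sob_sq a b r (\<lambda>k. c * x k) = c\<^sup>2 * sob_sq a b r x"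
  unfolding sob_sq_def jweight_def by (simp add: esum_cmult[symmetric] power_mult_distrib mult_ac)

lemma sob_sq_reflect: "sob_sq a b r (\<lambda>k. x (- k)) = sob_sq a b r x"
  unfolding sob_sq_def jweight_def using esum_neg[of "\<lambda>k. (ennreal (jbr a b k powr r) * x k)\<^sup>2"] by (simp add: jbr_neg)

lemma jweight_sq_le_sob_sq: "(jweight a b r x k)\<^sup>2 \<le> sob_sq a b r x"
  unfolding sob_sq_def using sum_le_esum[of "{k}" "\<lambda>k. (jweight a b r x k)\<^sup>2"] by simp

lemma finite_of_sob_sq_finite:
  assumes "sob_sq a b r x < \<infinity>" "0 \<le> r"
  shows "x k < \<infinity>"
proof -
  have "1 \<le> ennreal (jbr a b k powr r)"
    using ge_one_powr_ge_zero[OF jbr_ge1 assms(2)] by simp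
  then have "x k \<le> jweight a b r x k"
    unfolding jweight_def using mult_right_mono[of 1 _ "x k"] by simp
  moreover have "(jweight a b r x k)\<^sup>2 < \<infinity>" using jweight_sq_le_sob_sq[of a b r x k] assms(1) by simp
  then have "jweight a b r x k < \<infinity>"
    unfolding power2_eq_square using ennreal_mult_less_top[of "jweight a b r x k" "jweight a b r x k"] by auto
  ultimately show ?thesis by (rule le_less_trans)
qed

lemma esum_sq_le_jsum_sob_sq: "(esum z)\<^sup>2 \<le> jsum a b * sob_sq a b 1 z"
proof -
  let ?w = "\<lambda>k. ennreal (1 / (jbr a b k)\<^sup>2)"
  let ?v = "\<lambda>k. (jweight a b 1 z k)\<^sup>2"
  have "2 * (esum z)\<^sup>2 = esum (\<lambda>k. esum (\<lambda>m. 2 * z k * z m))"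
    unfolding esum_square by (simp add: esum_cmult mult.assoc)
  also have "\<dots> \<le> esum (\<lambda>k. esum (\<lambda>m. ?w m * ?v k + ?w k * ?v m))"
  proof (intro esum_mono)
    fix k m
    let ?p = "ennreal (jbr a b k / jbr a b m) * z k" and ?q = "ennreal (jbr a b m / jbr a b k) * z m"
    have pq: "ennreal (jbr a b k / jbr a b m) * ennreal (jbr a b m / jbr a b k) = 1"
      using jbr_pos[of a b k] jbr_pos[of a b m] by (simp add: ennreal_mult[symmetric])
    have "2 * z k * z m = 2 * ?p * ?q"
      using pq by (simp add: mult_ac)
    also have "\<dots> \<le> ?p\<^sup>2 + ?q\<^sup>2" by (rule ennreal_two_mult_le_squares)
    also have "?p\<^sup>2 = ?w m * ?v k"
      using ennreal_ratio_sq[OF jbr_pos[of a b k] jbr_pos[of a b m]]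
      by (simp add: jweight_def power_mult_distrib mult.assoc)
    also have "?q\<^sup>2 = ?w k * ?v m"
      using ennreal_ratio_sq[OF jbr_pos[of a b m] jbr_pos[of a b k]]
      by (simp add: jweight_def power_mult_distrib mult.assoc)
    finally show "2 * z k * z m \<le> ?w m * ?v k + ?w k * ?v m" .
  qed
  also have "\<dots> = esum (\<lambda>k. jsum a b * ?v k) + esum (\<lambda>k. ?w k * sob_sq a b 1 z)"
    unfolding jsum_def sob_sq_def by (simp add: esum_add esum_cmult esum_cmult_right)
  also have "\<dots> = 2 * (jsum a b * sob_sq a b 1 z)"
    unfolding jsum_def sob_sq_def by (simp add: esum_cmult esum_cmult_right mult.commute mult_2)
  finally show ?thesis
    by (subst (asm) ennreal_mult_le_mult_iff) auto
qed

lemma esum_jweight_sq_le: "(esum (jweight a b r y))\<^sup>2 \<le> jsum a b * sob_sq a b (r + 1) y"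
  using esum_sq_le_jsum_sob_sq[of "jweight a b r y" a b] by (simp add: sob_sq_jweight add.commute)

lemma jweight_econv_le:
  assumes "0 \<le> r"
  shows "jweight a b r (econv x y) l \<le> ennreal (2 powr r) * (econv (jweight a b r x) y l + econv x (jweight a b r y) l)"
proof -
  have "jweight a b r (econv x y) l = esum (\<lambda>k. ennreal (jbr a b l powr r) * (x k * y (l - k)))"
    unfolding jweight_def econv_def by (simp add: esum_cmult)
  also have "\<dots> \<le> esum (\<lambda>k. ennreal (2 powr r) * (jweight a b r x k * y (l - k) + x k * jweight a b r y (l - k)))"
  proof (intro esum_mono)
    fix k
    have "ennreal (jbr a b l powr r) \<le> ennreal (2 powr r * (jbr a b k powr r + jbr a b (l - k) powr r))"
      by (intro ennreal_leI jbr_powr_le_split assms)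
    also have "\<dots> = ennreal (2 powr r) * (ennreal (jbr a b k powr r) + ennreal (jbr a b (l - k) powr r))"
      by (simp add: ennreal_mult ennreal_plus)
    finally have "ennreal (jbr a b l powr r) * (x k * y (l - k)) \<le> ennreal (2 powr r) * (ennreal (jbr a b k powr r) + ennreal (jbr a b (l - k) powr r)) * (x k * y (l - k))"
      by (rule mult_right_mono) simp
    then show "ennreal (jbr a b l powr r) * (x k * y (l - k)) \<le> ennreal (2 powr r) * (jweight a b r x k * y (l - k) + x k * jweight a b r y (l - k))"
      unfolding jweight_def by (simp add: algebra_simps)
  qed
  also have "\<dots> = ennreal (2 powr r) * (econv (jweight a b r x) y l + econv x (jweight a b r y) l)"
    unfolding econv_def by (simp add: esum_cmult esum_add)
  finally show ?thesis .
qed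

abbreviation split_const :: "real \<Rightarrow> ennreal" where
  "split_const r \<equiv> ennreal (2 * 4 powr r)"

lemma sob_sq_econv_split:
  assumes "0 \<le> r"
  shows "sob_sq a b r (econv x y) \<le> split_const r * (sob_sq a b 0 (econv (jweight a b r x) y) + sob_sq a b 0 (econv x (jweight a b r y)))"
proof -
  have "sob_sq a b r (econv x y) \<le> esum (\<lambda>l. (ennreal (2 powr r) * (econv (jweight a b r x) y l + econv x (jweight a b r y) l))\<^sup>2)"
    unfolding sob_sq_def by (intro esum_mono power_mono jweight_econv_le assms) simp
  also have "\<dots> \<le> esum (\<lambda>l. ennreal (4 powr r) * (2 * (econv (jweight a b r x) y l)\<^sup>2 + 2 * (econv x (jweight a b r y) l)\<^sup>2))"
  proof (intro esum_mono)
    fix l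
    have "4 powr r = 2 powr r * 2 powr r" using powr_mult[of 2 2 r] by simp
    then have e: "(ennreal (2 powr r))\<^sup>2 = ennreal (4 powr r)"
      by (simp add: power2_eq_square ennreal_mult)
    show "(ennreal (2 powr r) * (econv (jweight a b r x) y l + econv x (jweight a b r y) l))\<^sup>2 \<le> ennreal (4 powr r) * (2 * (econv (jweight a b r x) y l)\<^sup>2 + 2 * (econv x (jweight a b r y) l)\<^sup>2)"
      unfolding power_mult_distrib e by (intro mult_left_mono ennreal_sum_sq_le) simp
  qed
  also have "\<dots> = split_const r * (sob_sq a b 0 (econv (jweight a b r x) y) + sob_sq a b 0 (econv x (jweight a b r y)))"
    unfolding sob_sq_0 by (simp add: esum_cmult esum_add ennreal_mult algebra_simps)
  finally show ?thesis .
qed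

lemma young_sob_sq: "sob_sq a b 0 (econv x y) \<le> sob_sq a b 0 x * (esum y)\<^sup>2"
  unfolding sob_sq_0 by (rule young_l2_l1)

lemma young_sob_sq_right: "sob_sq a b 0 (econv x y) \<le> (esum x)\<^sup>2 * sob_sq a b 0 y"
  using young_sob_sq[of a b y x] by (simp add: econv_commute mult.commute)

lemma sob_sq_econv_le:
  assumes r: "0 \<le> r"
    and x: "sob_sq a b r x \<le> X" "sob_sq a b 1 x \<le> X" and y: "sob_sq a b r y \<le> Y" "sob_sq a b 1 y \<le> Y"
  shows "sob_sq a b r (econv x y) \<le> split_const r * (2 * (jsum a b * (X * Y)))"
proof -
  have ex: "(esum x)\<^sup>2 \<le> jsum a b * X" and ey: "(esum y)\<^sup>2 \<le> jsum a b * Y"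
    using esum_sq_le_jsum_sob_sq[of x a b] esum_sq_le_jsum_sob_sq[of y a b] x(2) y(2)
    by (meson mult_left_mono order_trans zero_le)+
  have "sob_sq a b 0 (econv (jweight a b r x) y) \<le> sob_sq a b r x * (esum y)\<^sup>2"
    using young_sob_sq[of a b "jweight a b r x" y] by (simp add: sob_sq_jweight)
  also have "\<dots> \<le> X * (jsum a b * Y)" using x(1) ey by (rule mult_mono) auto
  finally have 1: "sob_sq a b 0 (econv (jweight a b r x) y) \<le> jsum a b * (X * Y)" by (simp add: mult_ac)
  have "sob_sq a b 0 (econv x (jweight a b r y)) \<le> (esum x)\<^sup>2 * sob_sq a b r y"
    using young_sob_sq_right[of a b x "jweight a b r y"] by (simp add: sob_sq_jweight)
  also have "\<dots> \<le> (jsum a b * X) * Y" using ex y(1) by (rule mult_mono) auto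
  finally have 2: "sob_sq a b 0 (econv x (jweight a b r y)) \<le> jsum a b * (X * Y)" by (simp add: mult_ac)
  have "sob_sq a b r (econv x y)
      \<le> split_const r * (sob_sq a b 0 (econv (jweight a b r x) y) + sob_sq a b 0 (econv x (jweight a b r y)))"
    by (rule sob_sq_econv_split[OF r])
  also have "\<dots> \<le> split_const r * (jsum a b * (X * Y) + jsum a b * (X * Y))"
    by (intro mult_left_mono add_mono 1 2) simp
  finally show ?thesis by (simp only: mult_2)
qed

lemma sob_sq_econv_le':
  assumes r: "0 \<le> r"
    and x: "sob_sq a b r x \<le> X" "sob_sq a b 0 x \<le> X" and y: "sob_sq a b 1 y \<le> Y" "sob_sq a b (r + 1) y \<le> Y"
  shows "sob_sq a b r (econv x y) \<le> split_const r * (2 * (jsum a b * (X * Y)))"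
proof -
  have ey: "(esum y)\<^sup>2 \<le> jsum a b * Y" and ewy: "(esum (jweight a b r y))\<^sup>2 \<le> jsum a b * Y"
    using esum_sq_le_jsum_sob_sq[of y a b] esum_jweight_sq_le[of a b r y] y
    by (meson mult_left_mono order_trans zero_le)+
  have "sob_sq a b 0 (econv (jweight a b r x) y) \<le> sob_sq a b r x * (esum y)\<^sup>2"
    using young_sob_sq[of a b "jweight a b r x" y] by (simp add: sob_sq_jweight)
  also have "\<dots> \<le> X * (jsum a b * Y)" using x(1) ey by (rule mult_mono) auto
  finally have 1: "sob_sq a b 0 (econv (jweight a b r x) y) \<le> jsum a b * (X * Y)" by (simp add: mult_ac)
  have "sob_sq a b 0 (econv x (jweight a b r y)) \<le> sob_sq a b 0 x * (esum (jweight a b r y))\<^sup>2"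
    by (rule young_sob_sq)
  also have "\<dots> \<le> X * (jsum a b * Y)" using x(2) ewy by (rule mult_mono) auto
  finally have 2: "sob_sq a b 0 (econv x (jweight a b r y)) \<le> jsum a b * (X * Y)" by (simp add: mult_ac)
  have "sob_sq a b r (econv x y)
      \<le> split_const r * (sob_sq a b 0 (econv (jweight a b r x) y) + sob_sq a b 0 (econv x (jweight a b r y)))"
    by (rule sob_sq_econv_split[OF r])
  also have "\<dots> \<le> split_const r * (jsum a b * (X * Y) + jsum a b * (X * Y))"
    by (intro mult_left_mono add_mono 1 2) simp
  finally show ?thesis by (simp only: mult_2)
qed

section \<open>Convolution powers and their differences\<close>

lemma norm_conv_le_econv:
  assumes "\<And>k. ennreal (norm (u k)) \<le> x k" "\<And>k. ennreal (norm (v k)) \<le> y k"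
  shows "ennreal (norm (conv u v l)) \<le> econv x y l"
  unfolding conv_def econv_def
  by (rule norm_infsum_le_esum_of_le) (simp add: ennreal_norm_mult assms mult_mono)

lemma conv_summable_of_econv:
  fixes u v :: "int \<Rightarrow> complex"
  assumes "\<And>k. ennreal (norm (u k)) \<le> x k" "\<And>k. ennreal (norm (v k)) \<le> y k" "econv x y l < \<infinity>"
  shows "(\<lambda>k. u k * v (l - k)) summable_on UNIV"
proof (rule summable_on_of_esum_finite(1)[of "\<lambda>k. u k * v (l - k)"])
  have "esum (\<lambda>k. ennreal (norm (u k * v (l - k)))) \<le> econv x y l"
    unfolding econv_def by (intro esum_mono) (simp add: ennreal_norm_mult assms mult_mono)
  then show "esum (\<lambda>k. ennreal (norm (u k * v (l - k)))) < \<infinity>" using assms(3) by simp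
qed

lemma conv_diff_eq_infsum:
  assumes "\<And>k. ennreal (norm (R1 k)) \<le> x k" "\<And>k. ennreal (norm (P1 k)) \<le> y k"
    "\<And>k. ennreal (norm (R0 k)) \<le> x k" "\<And>k. ennreal (norm (P0 k)) \<le> y k" "econv x y l < \<infinity>"
  shows "conv R1 P1 l - conv R0 P0 l = infsum (\<lambda>k. R1 k * P1 (l - k) - R0 k * P0 (l - k)) UNIV"
  unfolding conv_def
  by (rule infsum_diff[symmetric]) (intro conv_summable_of_econv[OF assms(1,2,5)] conv_summable_of_econv[OF assms(3,4,5)])+

lemma conv_second_diff_eq_infsum:
  assumes "\<And>k. ennreal (norm (Rp k)) \<le> x k" "\<And>k. ennreal (norm (Pp k)) \<le> y k"
    "\<And>k. ennreal (norm (Rm k)) \<le> x k" "\<And>k. ennreal (norm (Pm k)) \<le> y k"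
    "\<And>k. ennreal (norm (R0 k)) \<le> x k" "\<And>k. ennreal (norm (P0 k)) \<le> y k" "econv x y l < \<infinity>"
  shows "conv Rp Pp l + conv Rm Pm l - 2 * conv R0 P0 l
     = infsum (\<lambda>k. Rp k * Pp (l - k) + Rm k * Pm (l - k) - 2 * (R0 k * P0 (l - k))) UNIV"
proof -
  have s1: "(\<lambda>k. Rp k * Pp (l - k)) summable_on UNIV" by (rule conv_summable_of_econv[OF assms(1,2,7)])
  have s2: "(\<lambda>k. Rm k * Pm (l - k)) summable_on UNIV" by (rule conv_summable_of_econv[OF assms(3,4,7)])
  have s3: "(\<lambda>k. R0 k * P0 (l - k)) summable_on UNIV" by (rule conv_summable_of_econv[OF assms(5,6,7)])
  have "infsum (\<lambda>k. Rp k * Pp (l - k) + Rm k * Pm (l - k) - 2 * (R0 k * P0 (l - k))) UNIV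
      = infsum (\<lambda>k. Rp k * Pp (l - k) + Rm k * Pm (l - k)) UNIV - infsum (\<lambda>k. 2 * (R0 k * P0 (l - k))) UNIV"
    by (rule infsum_diff) (intro summable_on_add s1 s2, rule summable_on_cmult_right[OF s3])
  also have "\<dots> = conv Rp Pp l + conv Rm Pm l - 2 * conv R0 P0 l"
    unfolding conv_def by (simp add: infsum_add[OF s1 s2] infsum_cmult_right[OF s3])
  finally show ?thesis by simp
qed

lemma conv_first_difference_majorant:
  assumes R1: "\<And>k. ennreal (norm (R1 k)) \<le> x k" and R0: "\<And>k. ennreal (norm (R0 k)) \<le> x k"
    and P1: "\<And>k. ennreal (norm (P1 k)) \<le> A k" and P0: "\<And>k. ennreal (norm (P0 k)) \<le> A k"
    and dR: "\<And>k. ennreal (norm (R1 k - R0 k)) \<le> e * y k"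
    and dP: "\<And>k. ennreal (norm (P1 k - P0 k)) \<le> e * B k"
    and fin: "econv x A l < \<infinity>"
  shows "ennreal (norm (conv R1 P1 l - conv R0 P0 l)) \<le> e * (econv y A l + econv x B l)"
proof -
  have "ennreal (norm (conv R1 P1 l - conv R0 P0 l))
      \<le> esum (\<lambda>k. e * (y k * A (l - k) + x k * B (l - k)))"
    unfolding conv_diff_eq_infsum[OF R1 P1 R0 P0 fin]
    by (intro norm_infsum_le_esum_of_le ennreal_norm_product_difference_le R0 P1 dR dP)
  also have "\<dots> = e * (econv y A l + econv x B l)"
    by (simp add: esum_add esum_cmult econv_def distrib_left)
  finally show ?thesis .
qed

lemma conv_second_difference_majorant:
  assumes Rp: "\<And>k. ennreal (norm (Rp k)) \<le> x k" and Rm: "\<And>k. ennreal (norm (Rm k)) \<le> x k"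
    and R0: "\<And>k. ennreal (norm (R0 k)) \<le> x k"
    and Pp: "\<And>k. ennreal (norm (Pp k)) \<le> A k" and Pm: "\<And>k. ennreal (norm (Pm k)) \<le> A k"
    and P0: "\<And>k. ennreal (norm (P0 k)) \<le> A k"
    and dRp: "\<And>k. ennreal (norm (Rp k - R0 k)) \<le> e * y k"
    and dRm: "\<And>k. ennreal (norm (Rm k - R0 k)) \<le> e * y k"
    and dPp: "\<And>k. ennreal (norm (Pp k - P0 k)) \<le> e * B k"
    and dPm: "\<And>k. ennreal (norm (Pm k - P0 k)) \<le> e * B k"
    and ddR: "\<And>k. ennreal (norm (Rp k + Rm k - 2 * R0 k)) \<le> e\<^sup>2 * z k"
    and ddP: "\<And>k. ennreal (norm (Pp k + Pm k - 2 * P0 k)) \<le> e\<^sup>2 * C k"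
    and fin: "econv x A l < \<infinity>"
  shows "ennreal (norm (conv Rp Pp l + conv Rm Pm l - 2 * conv R0 P0 l))
    \<le> e\<^sup>2 * (econv z A l + econv x C l + 2 * econv y B l)"
proof -
  have "ennreal (norm (conv Rp Pp l + conv Rm Pm l - 2 * conv R0 P0 l))
      \<le> esum (\<lambda>k. e\<^sup>2 * (z k * A (l - k) + x k * C (l - k) + 2 * (y k * B (l - k))))"
    unfolding conv_second_diff_eq_infsum[OF Rp Pp Rm Pm R0 P0 fin]
    by (intro norm_infsum_le_esum_of_le ennreal_norm_product_second_difference_le R0 P0 dRp dRm dPp dPm ddR ddP)
  also have "\<dots> = e\<^sup>2 * (econv z A l + econv x C l + 2 * econv y B l)"
    by (simp add: esum_add esum_cmult econv_def distrib_left)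
  finally show ?thesis .
qed

text \<open>If \<open>x\<close>, \<open>y\<close>, \<open>z\<close> majorise a family of sequences together with its first and second
  differences in a parameter, then \<open>pow_maj x n\<close>, \<open>pow_dmaj x y n\<close>, \<open>pow_ddmaj x y z n\<close> majorise the
  \<open>n\<close>-th convolution powers and their first and second differences; the recursions are the
  discrete Leibniz rules for \<open>u * u\<^sup>n\<close>.\<close>

definition delta0 :: "int \<Rightarrow> ennreal" where "delta0 k = (if k = 0 then 1 else 0)"

fun pow_maj :: "(int \<Rightarrow> ennreal) \<Rightarrow> nat \<Rightarrow> int \<Rightarrow> ennreal" where
  "pow_maj x 0 = delta0"
| "pow_maj x (Suc n) = econv x (pow_maj x n)"

fun pow_dmaj :: "(int \<Rightarrow> ennreal) \<Rightarrow> (int \<Rightarrow> ennreal) \<Rightarrow> nat \<Rightarrow> int \<Rightarrow> ennreal" where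
  "pow_dmaj x y 0 = (\<lambda>_. 0)"
| "pow_dmaj x y (Suc n) = (\<lambda>l. econv y (pow_maj x n) l + econv x (pow_dmaj x y n) l)"

fun pow_ddmaj :: "(int \<Rightarrow> ennreal) \<Rightarrow> (int \<Rightarrow> ennreal) \<Rightarrow> (int \<Rightarrow> ennreal) \<Rightarrow> nat \<Rightarrow> int \<Rightarrow> ennreal" where
  "pow_ddmaj x y z 0 = (\<lambda>_. 0)"
| "pow_ddmaj x y z (Suc n) = (\<lambda>l. econv z (pow_maj x n) l + econv x (pow_ddmaj x y z n) l + 2 * econv y (pow_dmaj x y n) l)"

lemma conv_pow_difference_majorants:
  fixes R :: "real \<Rightarrow> int \<Rightarrow> complex" and c u :: real and e :: ennreal
  assumes bound: "\<And>\<sigma> k. \<sigma> \<in> {c - u, c, c + u} \<Longrightarrow> ennreal (norm (R \<sigma> k)) \<le> x k"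
    and dp: "\<And>k. ennreal (norm (R (c + u) k - R c k)) \<le> e * y k"
    and dm: "\<And>k. ennreal (norm (R (c - u) k - R c k)) \<le> e * y k"
    and dd: "\<And>k. ennreal (norm (R (c + u) k + R (c - u) k - 2 * R c k)) \<le> e\<^sup>2 * z k"
    and fin: "\<And>m l. pow_maj x m l < \<infinity>"
  shows "(\<forall>\<sigma>\<in>{c - u, c, c + u}. \<forall>l. ennreal (norm (conv_pow (R \<sigma>) n l)) \<le> pow_maj x n l) \<and>
         (\<forall>l. ennreal (norm (conv_pow (R (c + u)) n l - conv_pow (R c) n l)) \<le> e * pow_dmaj x y n l) \<and>
         (\<forall>l. ennreal (norm (conv_pow (R (c - u)) n l - conv_pow (R c) n l)) \<le> e * pow_dmaj x y n l) \<and>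
         (\<forall>l. ennreal (norm (conv_pow (R (c + u)) n l + conv_pow (R (c - u)) n l - 2 * conv_pow (R c) n l))
              \<le> e\<^sup>2 * pow_ddmaj x y z n l)"
proof (induction n)
  case 0
  show ?case by (simp add: delta0_def)
next
  case (Suc n)
  let ?P = "\<lambda>\<sigma>. conv_pow (R \<sigma>) n"
  have IH: "\<And>\<sigma> l. \<sigma> \<in> {c - u, c, c + u} \<Longrightarrow> ennreal (norm (?P \<sigma> l)) \<le> pow_maj x n l"
    "\<And>l. ennreal (norm (?P (c + u) l - ?P c l)) \<le> e * pow_dmaj x y n l"
    "\<And>l. ennreal (norm (?P (c - u) l - ?P c l)) \<le> e * pow_dmaj x y n l"
    "\<And>l. ennreal (norm (?P (c + u) l + ?P (c - u) l - 2 * ?P c l)) \<le> e\<^sup>2 * pow_ddmaj x y z n l"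
    using Suc.IH by blast+
  have fin1: "econv x (pow_maj x n) l < \<infinity>" for l using fin[of "Suc n" l] by simp
  have mem: "c + u \<in> {c - u, c, c + u}" "c - u \<in> {c - u, c, c + u}" "c \<in> {c - u, c, c + u}" by auto
  show ?case
  proof (intro conjI ballI allI)
    fix \<sigma> l assume "\<sigma> \<in> {c - u, c, c + u}"
    then show "ennreal (norm (conv_pow (R \<sigma>) (Suc n) l)) \<le> pow_maj x (Suc n) l"
      using norm_conv_le_econv[of "R \<sigma>" x "?P \<sigma>" "pow_maj x n" l] bound IH(1) by simp
  next
    fix l
    show "ennreal (norm (conv_pow (R (c + u)) (Suc n) l - conv_pow (R c) (Suc n) l)) \<le> e * pow_dmaj x y (Suc n) l"
      using conv_first_difference_majorant[OF bound[OF mem(1)] bound[OF mem(3)] IH(1)[OF mem(1)] IH(1)[OF mem(3)]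
          dp IH(2) fin1] by simp
    show "ennreal (norm (conv_pow (R (c - u)) (Suc n) l - conv_pow (R c) (Suc n) l)) \<le> e * pow_dmaj x y (Suc n) l"
      using conv_first_difference_majorant[OF bound[OF mem(2)] bound[OF mem(3)] IH(1)[OF mem(2)] IH(1)[OF mem(3)]
          dm IH(3) fin1] by simp
    show "ennreal (norm (conv_pow (R (c + u)) (Suc n) l + conv_pow (R (c - u)) (Suc n) l - 2 * conv_pow (R c) (Suc n) l))
        \<le> e\<^sup>2 * pow_ddmaj x y z (Suc n) l"
      using conv_second_difference_majorant[OF bound[OF mem(1)] bound[OF mem(2)] bound[OF mem(3)]
          IH(1)[OF mem(1)] IH(1)[OF mem(2)] IH(1)[OF mem(3)] dp dm IH(2) IH(3) dd IH(4) fin1] by simp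
  qed
qed

lemma sob_sq_delta0: "sob_sq a b r delta0 = 1"
proof -
  have "sob_sq a b r delta0 = (\<Sum>k\<in>{0}. (jweight a b r delta0 k)\<^sup>2)"
    unfolding sob_sq_def by (rule nn_integral_count_space') (auto simp: jweight_def delta0_def)
  then show ?thesis by (simp add: jweight_def delta0_def jbr_0)
qed

lemma sob_sq_zero: "sob_sq a b r (\<lambda>_. 0) = 0"
  unfolding sob_sq_def jweight_def by simp

lemma sob_sq_pow_majorants_step:
  fixes a b s :: real and K2 M :: ennreal
  defines "T \<equiv> \<lambda>r. split_const r * (2 * (jsum a b * (K2 * M)))"
  assumes s: "1 \<le> s" and x: "sob_sq a b (s + 1) x \<le> K2"
    and A: "sob_sq a b (s + 1) A \<le> M" and B: "sob_sq a b s B \<le> M" and C: "sob_sq a b (s - 1) C \<le> M"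
  shows "sob_sq a b (s + 1) (econv x A) \<le> T (s + 1)"
    and "sob_sq a b s (\<lambda>l. econv (jweight a b 1 x) A l + econv x B l) \<le> 4 * T s"
    and "sob_sq a b (s - 1) (\<lambda>l. econv (jweight a b 2 x) A l + econv x C l + 2 * econv (jweight a b 1 x) B l)
      \<le> 16 * T (s - 1)"
proof -
  have x': "sob_sq a b r x \<le> K2" if "r \<le> s + 1" for r
    using sob_sq_mono_exp[OF that] x by (rule order_trans)
  have wx: "sob_sq a b r (jweight a b t x) \<le> K2" if "r + t \<le> s + 1" for r t
    using x'[OF that] by (simp add: sob_sq_jweight)
  have A': "sob_sq a b r A \<le> M" if "r \<le> s + 1" for r
    using sob_sq_mono_exp[OF that] A by (rule order_trans)
  have B': "sob_sq a b r B \<le> M" if "r \<le> s" for r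
    using sob_sq_mono_exp[OF that] B by (rule order_trans)
  have C': "sob_sq a b r C \<le> M" if "r \<le> s - 1" for r
    using sob_sq_mono_exp[OF that] C by (rule order_trans)
  show "sob_sq a b (s + 1) (econv x A) \<le> T (s + 1)"
    unfolding T_def using s by (intro sob_sq_econv_le x' A') auto
  have "sob_sq a b s (econv (jweight a b 1 x) A) \<le> T s" "sob_sq a b s (econv x B) \<le> T s"
    unfolding T_def using s by (intro sob_sq_econv_le wx x' A' B'; simp)+
  then have "sob_sq a b s (\<lambda>l. econv (jweight a b 1 x) A l + econv x B l) \<le> 2 * T s + 2 * T s"
    by (intro order_trans[OF sob_sq_add_le] add_mono mult_left_mono) auto
  then show "sob_sq a b s (\<lambda>l. econv (jweight a b 1 x) A l + econv x B l) \<le> 4 * T s"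
    by (simp add: distrib_right[symmetric])
  have "sob_sq a b (s - 1) (econv C x) \<le> split_const (s - 1) * (2 * (jsum a b * (M * K2)))"
    using s by (intro sob_sq_econv_le' x' C'; simp)
  then have "sob_sq a b (s - 1) (econv x C) \<le> T (s - 1)"
    unfolding T_def econv_commute[of C x] by (simp only: mult.commute[of M K2])
  moreover have "sob_sq a b (s - 1) (econv (jweight a b 2 x) A) \<le> T (s - 1)"
    unfolding T_def using s by (intro sob_sq_econv_le' wx A'; simp)
  moreover have "sob_sq a b (s - 1) (econv (jweight a b 1 x) B) \<le> T (s - 1)"
    unfolding T_def using s by (intro sob_sq_econv_le wx B'; simp)
  ultimately have bounds: "sob_sq a b (s - 1) (econv x C) \<le> T (s - 1)"
    "sob_sq a b (s - 1) (econv (jweight a b 2 x) A) \<le> T (s - 1)"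
    "sob_sq a b (s - 1) (econv (jweight a b 1 x) B) \<le> T (s - 1)" by blast+
  have "sob_sq a b (s - 1) (\<lambda>l. econv (jweight a b 2 x) A l + econv x C l + 2 * econv (jweight a b 1 x) B l)
      \<le> 2 * sob_sq a b (s - 1) (\<lambda>l. econv (jweight a b 2 x) A l + econv x C l)
        + 2 * sob_sq a b (s - 1) (\<lambda>l. 2 * econv (jweight a b 1 x) B l)"
    by (rule sob_sq_add_le)
  also have "\<dots> \<le> 2 * (2 * sob_sq a b (s - 1) (econv (jweight a b 2 x) A) + 2 * sob_sq a b (s - 1) (econv x C))
        + 2 * (2\<^sup>2 * sob_sq a b (s - 1) (econv (jweight a b 1 x) B))"
    unfolding sob_sq_cmult by (intro add_mono mult_left_mono sob_sq_add_le) auto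
  also have "\<dots> \<le> 2 * (2 * T (s - 1) + 2 * T (s - 1)) + 2 * (2\<^sup>2 * T (s - 1))"
    using bounds by (intro add_mono mult_left_mono) auto
  also have "\<dots> = 16 * T (s - 1)"
    by (simp add: power2_eq_square mult.assoc[symmetric] flip: distrib_right)
  finally show "sob_sq a b (s - 1) (\<lambda>l. econv (jweight a b 2 x) A l + econv x C l + 2 * econv (jweight a b 1 x) B l)
      \<le> 16 * T (s - 1)" .
qed

lemma sob_sq_pow_majorants_bounded:
  fixes a b s :: real and K2 :: ennreal
  assumes ab: "a < b" and s: "1 \<le> s" and K2: "K2 < \<infinity>"
  shows "\<exists>M<\<infinity>. \<forall>x. sob_sq a b (s + 1) x \<le> K2 \<longrightarrow>
     sob_sq a b (s + 1) (pow_maj x n) \<le> M \<and> sob_sq a b s (pow_dmaj x (jweight a b 1 x) n) \<le> M \<and>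
     sob_sq a b (s - 1) (pow_ddmaj x (jweight a b 1 x) (jweight a b 2 x) n) \<le> M"
proof (induction n)
  case 0
  show ?case by (intro exI[of _ 1]) (simp add: sob_sq_delta0 sob_sq_zero)
next
  case (Suc n)
  then obtain M where M: "M < \<infinity>" and IH: "\<And>x. sob_sq a b (s + 1) x \<le> K2 \<Longrightarrow>
     sob_sq a b (s + 1) (pow_maj x n) \<le> M \<and> sob_sq a b s (pow_dmaj x (jweight a b 1 x) n) \<le> M \<and>
     sob_sq a b (s - 1) (pow_ddmaj x (jweight a b 1 x) (jweight a b 2 x) n) \<le> M" by blast
  define T where "T r = split_const r * (2 * (jsum a b * (K2 * M)))" for r
  have "T (s + 1) + 4 * T s + 16 * T (s - 1) < \<infinity>"
    using jsum_finite[OF ab] K2 M unfolding T_def jsum_def by (simp add: ennreal_mult_less_top)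
  moreover have "sob_sq a b (s + 1) (pow_maj x (Suc n)) \<le> T (s + 1) + 4 * T s + 16 * T (s - 1)
      \<and> sob_sq a b s (pow_dmaj x (jweight a b 1 x) (Suc n)) \<le> T (s + 1) + 4 * T s + 16 * T (s - 1)
      \<and> sob_sq a b (s - 1) (pow_ddmaj x (jweight a b 1 x) (jweight a b 2 x) (Suc n)) \<le> T (s + 1) + 4 * T s + 16 * T (s - 1)"
    if "sob_sq a b (s + 1) x \<le> K2" for x
  proof -
    have le_sum: "u \<le> u + v + w" "v \<le> u + v + w" "w \<le> u + v + w" for u v w :: ennreal
      by (simp_all add: add_increasing add_increasing2)
    note step = sob_sq_pow_majorants_step[OF s that, where M = M and A = "pow_maj x n"
        and B = "pow_dmaj x (jweight a b 1 x) n" and C = "pow_ddmaj x (jweight a b 1 x) (jweight a b 2 x) n",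
        folded T_def]
    show ?thesis
      using order_trans[OF step(1) le_sum(1)] order_trans[OF step(2) le_sum(2)] order_trans[OF step(3) le_sum(3)]
        IH[OF that] by simp
  qed
  ultimately show ?case by blast
qed

lemma pow_maj_finite:
  assumes ab: "a < b" and s: "1 \<le> s" and x: "sob_sq a b (s + 1) x < \<infinity>"
  shows "pow_maj x m l < \<infinity>"
proof -
  obtain M where "M < \<infinity>" and "sob_sq a b (s + 1) (pow_maj x m) \<le> M"
    using sob_sq_pow_majorants_bounded[OF ab s x, of m] by blast
  then have "sob_sq a b (s + 1) (pow_maj x m) < \<infinity>" by (simp add: le_less_trans)
  then show ?thesis by (rule finite_of_sob_sq_finite) (use s in simp)
qed

section \<open>Hermitian symmetry\<close>

definition herm :: "(int \<Rightarrow> complex) \<Rightarrow> bool" where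
  "herm u \<longleftrightarrow> (\<forall>k. u (- k) = cnj (u k))"

lemma herm_re_part: "herm (re_part z)"
  unfolding herm_def re_part_def by simp

lemma herm_conv:
  assumes "herm u" "herm v"
  shows "herm (conv u v)"
  unfolding herm_def
proof
  fix l
  have bij: "bij_betw (\<lambda>k::int. - k) UNIV UNIV"
    by (rule bij_betwI[where g="\<lambda>k. - k"]) auto
  have "conv u v (- l) = infsum (\<lambda>k. (\<lambda>k. u k * v (- l - k)) (- k)) UNIV"
    unfolding conv_def by (rule infsum_reindex_bij_betw[OF bij, symmetric])
  also have "\<dots> = infsum (\<lambda>k. cnj (u k * v (l - k))) UNIV"
  proof (rule infsum_cong)
    fix k
    have e: "- l - - k = - (l - k)" by simp
    have hu: "u (- k) = cnj (u k)" and hv: "v (- (l - k)) = cnj (v (l - k))"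
      using assms unfolding herm_def by blast+
    show "u (- k) * v (- l - - k) = cnj (u k * v (l - k))"
      unfolding e hu hv by simp
  qed
  also have "\<dots> = cnj (conv u v l)"
    unfolding conv_def by (rule infsum_cnj)
  finally show "conv u v (- l) = cnj (conv u v l)" .
qed

lemma herm_conv_pow:
  assumes "herm u" shows "herm (conv_pow u n)"
proof (induction n)
  case 0 show ?case by (simp add: herm_def)
next
  case (Suc n) then show ?case using herm_conv[OF assms] by simp
qed

lemma Gnl_herm: "Gnl p z (- k) = cnj (Gnl p z k)"
  using herm_conv_pow[OF herm_re_part, of z "p + 1"] unfolding herm_def Gnl_def by blast

section \<open>Pointwise decay\<close>

definition decay :: "real \<Rightarrow> real \<Rightarrow> real \<Rightarrow> int \<Rightarrow> real" where
  "decay a b t k = jbr a b k powr (- t)"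

lemma decay_nonneg: "0 \<le> decay a b t k"
  unfolding decay_def by simp

lemma decay_0: "decay a b t 0 = 1"
  unfolding decay_def by (simp add: jbr_0)

lemma decay_le_inverse_sq: "2 \<le> t \<Longrightarrow> decay a b t k \<le> 1 / (jbr a b k)\<^sup>2"
proof -
  assume t: "2 \<le> t"
  have "jbr a b k powr (- t) \<le> jbr a b k powr (- 2)"
    using jbr_ge1[of a b k] t by (intro powr_mono) auto
  also have "\<dots> = 1 / (jbr a b k)\<^sup>2"
    using powr_realpow[OF jbr_pos, of a b k 2] by (simp add: powr_minus_divide)
  finally show ?thesis unfolding decay_def .
qed

lemma jsum_eq: "a < b \<Longrightarrow> jsum a b = ennreal (enn2real (jsum a b))"
  unfolding jsum_def using jsum_finite[of a b] by simp

definition decay_const :: "real \<Rightarrow> real \<Rightarrow> real \<Rightarrow> real" where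
  "decay_const a b t = 2 powr t * 2 * enn2real (jsum a b)"

lemma decay_const_nonneg: "0 \<le> decay_const a b t"
  unfolding decay_const_def using enn2real_nonneg by simp

lemma esum_decay_mult_le:
  assumes ab: "a < b" and t: "2 \<le> t"
  shows "esum (\<lambda>k. ennreal (decay a b t k * decay a b t (l - k))) \<le> ennreal (decay_const a b t * decay a b t l)"
proof -
  have "esum (\<lambda>k. ennreal (decay a b t k * decay a b t (l - k)))
     \<le> esum (\<lambda>k. ennreal (2 powr t * decay a b t l) * (ennreal (decay a b t k) + ennreal (decay a b t (l - k))))"
  proof (intro esum_mono)
    fix k
    have "decay a b t k * decay a b t (l - k) \<le> 2 powr t * decay a b t l * (decay a b t k + decay a b t (l - k))"
      unfolding decay_def by (rule jbr_neg_powr_mult_le) (use t in simp)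
    then have "ennreal (decay a b t k * decay a b t (l - k)) \<le> ennreal (2 powr t * decay a b t l * (decay a b t k + decay a b t (l - k)))"
      by (rule ennreal_leI)
    also have "\<dots> = ennreal (2 powr t * decay a b t l) * (ennreal (decay a b t k) + ennreal (decay a b t (l - k)))"
      using decay_nonneg by (simp add: ennreal_mult ennreal_plus)
    finally show "ennreal (decay a b t k * decay a b t (l - k)) \<le> ennreal (2 powr t * decay a b t l) * (ennreal (decay a b t k) + ennreal (decay a b t (l - k)))" .
  qed
  also have "\<dots> = ennreal (2 powr t * decay a b t l) * (2 * esum (\<lambda>k. ennreal (decay a b t k)))"
    by (simp add: esum_add esum_cmult esum_reflect[of "\<lambda>k. ennreal (decay a b t k)"] mult_2)
  also have "\<dots> \<le> ennreal (2 powr t * decay a b t l) * (2 * ennreal (enn2real (jsum a b)))"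
  proof -
    have "esum (\<lambda>k. ennreal (decay a b t k)) \<le> jsum a b"
      unfolding jsum_def by (intro esum_mono ennreal_leI decay_le_inverse_sq t)
    then show ?thesis using jsum_eq[OF ab] by (intro mult_left_mono) auto
  qed
  also have "\<dots> = ennreal (2 powr t * decay a b t l) * ennreal (2 * enn2real (jsum a b))"
    using enn2real_nonneg by (simp add: ennreal_mult)
  also have "\<dots> = ennreal (decay_const a b t * decay a b t l)"
    by (subst ennreal_mult[symmetric]) (auto simp: decay_const_def mult_ac enn2real_nonneg decay_nonneg)
  finally show ?thesis .
qed

lemma econv_decay_le:
  assumes ab: "a < b" and t: "2 \<le> t" and "0 \<le> \<alpha>" "0 \<le> \<beta>"
  shows "econv (\<lambda>k. ennreal (\<alpha> * decay a b t k)) (\<lambda>k. ennreal (\<beta> * decay a b t k)) l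
    \<le> ennreal (\<alpha> * \<beta> * decay_const a b t * decay a b t l)"
proof -
  have "econv (\<lambda>k. ennreal (\<alpha> * decay a b t k)) (\<lambda>k. ennreal (\<beta> * decay a b t k)) l
      = ennreal (\<alpha> * \<beta>) * esum (\<lambda>k. ennreal (decay a b t k * decay a b t (l - k)))"
    unfolding econv_def using assms decay_nonneg
    by (simp add: esum_cmult[symmetric] ennreal_mult[symmetric] mult_ac del: ennreal_mult)
  also have "\<dots> \<le> ennreal (\<alpha> * \<beta>) * ennreal (decay_const a b t * decay a b t l)"
    by (intro mult_left_mono esum_decay_mult_le ab t) simp
  also have "\<dots> = ennreal (\<alpha> * \<beta> * decay_const a b t * decay a b t l)"
    using assms decay_const_nonneg decay_nonneg by (simp add: ennreal_mult[symmetric] mult_ac del: ennreal_mult)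
  finally show ?thesis .
qed

lemma conv_decay:
  fixes u v :: "int \<Rightarrow> complex"
  assumes ab: "a < b" and t: "2 \<le> t" and al: "0 \<le> \<alpha>" "0 \<le> \<beta>"
    and hu: "\<And>k. norm (u k) \<le> \<alpha> * decay a b t k" and hv: "\<And>k. norm (v k) \<le> \<beta> * decay a b t k"
  shows "norm (conv u v l) \<le> \<alpha> * \<beta> * decay_const a b t * decay a b t l"
proof -
  have "ennreal (norm (conv u v l)) \<le> ennreal (\<alpha> * \<beta> * decay_const a b t * decay a b t l)"
    using hu hv by (intro order_trans[OF norm_conv_le_econv econv_decay_le[OF ab t al]] ennreal_leI)
  then show ?thesis
    using al decay_const_nonneg decay_nonneg by (simp add: ennreal_le_iff)
qed

lemma conv_pow_decay:
  fixes u :: "int \<Rightarrow> complex"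
  assumes ab: "a < b" and t: "2 \<le> t" and al: "0 \<le> \<alpha>"
    and hu: "\<And>k. norm (u k) \<le> \<alpha> * decay a b t k"
  shows "norm (conv_pow u n l) \<le> (\<alpha> * decay_const a b t) ^ n * decay a b t l"
proof (induction n arbitrary: l)
  case 0
  show ?case using decay_nonneg[of a b t l] by (simp add: decay_0)
next
  case (Suc n)
  have "norm (conv u (conv_pow u n) l) \<le> \<alpha> * (\<alpha> * decay_const a b t) ^ n * decay_const a b t * decay a b t l"
    by (rule conv_decay[OF ab t al _ hu]) (use Suc.IH decay_const_nonneg al in auto)
  then show ?case by (simp add: mult_ac)
qed

lemma re_part_decay:
  assumes "\<And>k. norm (z k) \<le> \<alpha> * decay a b t k"
  shows "norm (re_part z k) \<le> \<alpha> * decay a b t k"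
proof -
  have "decay a b t (- k) = decay a b t k" unfolding decay_def by (simp add: jbr_neg)
  have "norm (re_part z k) \<le> (norm (z k) + norm (z (- k))) / 2"
    unfolding re_part_def norm_divide by (simp add: norm_triangle_le)
  also have "\<dots> \<le> (\<alpha> * decay a b t k + \<alpha> * decay a b t k) / 2"
    using assms[of k] assms[of "- k"] \<open>decay a b t (- k) = _\<close> by (intro divide_right_mono add_mono) auto
  finally show ?thesis by simp
qed

fun pow_lip_const :: "real \<Rightarrow> real \<Rightarrow> nat \<Rightarrow> real" where
  "pow_lip_const \<alpha> C 0 = 0"
| "pow_lip_const \<alpha> C (Suc n) = C * ((\<alpha> * C) ^ n + \<alpha> * pow_lip_const \<alpha> C n)"

lemma pow_lip_const_nonneg: "0 \<le> \<alpha> \<Longrightarrow> 0 \<le> C \<Longrightarrow> 0 \<le> pow_lip_const \<alpha> C n"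
  by (induction n) auto

lemma conv_pow_lipschitz_decay:
  fixes x y :: "int \<Rightarrow> complex"
  assumes ab: "a < b" and t: "2 \<le> t" and al: "0 \<le> \<alpha>" and e: "0 \<le> e"
    and hx: "\<And>k. norm (x k) \<le> \<alpha> * decay a b t k" and hy: "\<And>k. norm (y k) \<le> \<alpha> * decay a b t k"
    and hd: "\<And>k. norm (x k - y k) \<le> e * decay a b t k"
  shows "norm (conv_pow x n l - conv_pow y n l) \<le> e * pow_lip_const \<alpha> (decay_const a b t) n * decay a b t l"
proof (induction n arbitrary: l)
  case 0
  show ?case by simp
next
  case (Suc n)
  let ?C = "decay_const a b t" and ?D = "pow_lip_const \<alpha> (decay_const a b t) n"
  let ?maj = "\<lambda>c k. ennreal (c * decay a b t k)"
  have C: "0 \<le> ?C" "0 \<le> ?D" using decay_const_nonneg pow_lip_const_nonneg[OF al decay_const_nonneg] by auto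
  have pow: "ennreal (norm (conv_pow z n k)) \<le> ?maj ((\<alpha> * ?C) ^ n) k"
    if "\<And>k. norm (z k) \<le> \<alpha> * decay a b t k" for z k
    using conv_pow_decay[OF ab t al that] by (rule ennreal_leI)
  have "ennreal (norm (conv x (conv_pow x n) l - conv y (conv_pow y n) l))
      \<le> ennreal e * (econv (?maj 1) (?maj ((\<alpha> * ?C) ^ n)) l + econv (?maj \<alpha>) (?maj ?D) l)"
  proof (rule conv_first_difference_majorant)
    show "ennreal (norm (x k - y k)) \<le> ennreal e * ?maj 1 k"
      and "ennreal (norm (conv_pow x n k - conv_pow y n k)) \<le> ennreal e * ?maj ?D k" for k
      using hd[of k] Suc.IH[of k] e C decay_nonneg[of a b t k]
      by (simp_all add: ennreal_le_mult_of_le mult.assoc)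
    show "econv (?maj \<alpha>) (?maj ((\<alpha> * ?C) ^ n)) l < \<infinity>"
      using econv_decay_le[OF ab t al, of "(\<alpha> * ?C) ^ n" l] al C by (simp add: le_less_trans)
  qed (use hx hy pow[OF hx] pow[OF hy] in \<open>auto intro: ennreal_leI\<close>)
  also have "\<dots> \<le> ennreal e * (ennreal (1 * (\<alpha> * ?C) ^ n * ?C * decay a b t l) + ennreal (\<alpha> * ?D * ?C * decay a b t l))"
    using al C by (intro mult_left_mono add_mono econv_decay_le[OF ab t]) auto
  also have "\<dots> = ennreal (e * pow_lip_const \<alpha> ?C (Suc n) * decay a b t l)"
    using al e C decay_nonneg by (simp add: ennreal_mult[symmetric] ennreal_plus[symmetric] algebra_simps
        del: ennreal_mult ennreal_plus)
  finally show ?case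
    using e decay_nonneg[of a b t l] pow_lip_const_nonneg[OF al C(1), of "Suc n"]
    by (simp add: ennreal_le_iff del: pow_lip_const.simps)
qed

section \<open>Mean value estimates and phase factors\<close>

lemma norm_diff_le_of_vector_derivative:
  fixes f :: "real \<Rightarrow> 'a::real_normed_vector"
  assumes ab: "a \<le> b"
    and d: "\<And>x. x \<in> {a..b} \<Longrightarrow> (f has_vector_derivative f' x) (at x within {a..b})"
    and B: "\<And>x. x \<in> {a..b} \<Longrightarrow> norm (f' x) \<le> B"
  shows "norm (f b - f a) \<le> B * (b - a)"
proof -
  have "norm (f b - f a) \<le> B * norm (b - a)"
  proof (rule differentiable_bound[where S="{a..b}" and f'="\<lambda>x h. h *\<^sub>R f' x"])
    show "convex {a..b}" by simp
    show "(f has_derivative (\<lambda>h. h *\<^sub>R f' x)) (at x within {a..b})" if "x \<in> {a..b}" for x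
      using d[OF that] unfolding has_vector_derivative_def .
    show "onorm (\<lambda>h. h *\<^sub>R f' x) \<le> B" if "x \<in> {a..b}" for x
    proof -
      have "onorm (\<lambda>h::real. h *\<^sub>R f' x) = onorm (\<lambda>h::real. h) * norm (f' x)"
        by (rule onorm_scaleR_left) (rule bounded_linear_ident)
      also have "\<dots> = norm (f' x)" by (simp add: onorm_id)
      finally show ?thesis using B[OF that] by simp
    qed
  qed (use ab in auto)
  then show ?thesis using ab by simp
qed

lemma cis_add: "cis (x + y) = cis x * cis y"
  by (simp add: cis_mult)

lemma has_vector_derivative_cis_affine:
  "((\<lambda>x. cis (x * L + c)) has_vector_derivative (\<i> * complex_of_real L * cis (x * L + c))) (at x within S)"
proof -
  have "((\<lambda>x. exp (\<i> * complex_of_real (x * L + c))) has_vector_derivative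
      (\<i> * complex_of_real L * exp (\<i> * complex_of_real (x * L + c)))) (at x within S)"
    by (rule field_vector_diff_chain_within[where f = "\<lambda>x. \<i> * complex_of_real (x * L + c)", unfolded o_def])
      (auto intro!: derivative_eq_intros DERIV_exp[THEN has_field_derivative_at_within])
  then show ?thesis by (simp add: cis_conv_exp)
qed

lemma norm_cis_minus_1_le: "norm (cis \<theta> - 1) \<le> \<bar>\<theta>\<bar>"
proof -
  have d: "((\<lambda>x. cis (x * 1 + 0)) has_vector_derivative (\<i> * complex_of_real 1 * cis (x * 1 + 0))) (at x within S)"
    for x S by (rule has_vector_derivative_cis_affine)
  have n: "norm (\<i> * complex_of_real 1 * cis (x * 1 + 0)) \<le> 1" for x by (simp add: norm_mult)
  show ?thesis
  proof (cases "0 \<le> \<theta>")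
    case True
    show ?thesis using norm_diff_le_of_vector_derivative[OF True d n] True by simp
  next
    case False
    have "norm (cis (0 * 1 + 0) - cis (\<theta> * 1 + 0)) \<le> 1 * (0 - \<theta>)"
      by (rule norm_diff_le_of_vector_derivative[OF _ d n]) (use False in simp)
    then show ?thesis using False by (simp add: norm_minus_commute)
  qed
qed

lemma norm_cis_minus_cis_neg_le: "norm (cis \<theta> - cis (- \<theta>)) \<le> 2 * \<bar>\<theta>\<bar>"
proof -
  have "norm (cis \<theta> - cis (- \<theta>)) \<le> norm (cis \<theta> - 1) + norm (cis (- \<theta>) - 1)"
    using norm_triangle_ineq4[of "cis \<theta> - 1" "cis (- \<theta>) - 1"] by simp
  also have "\<dots> \<le> \<bar>\<theta>\<bar> + \<bar>- \<theta>\<bar>" by (intro add_mono norm_cis_minus_1_le)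
  finally show ?thesis by simp
qed

lemma norm_cis_second_difference_le: "norm (cis \<theta> + cis (- \<theta>) - 2) \<le> \<theta>\<^sup>2"
proof -
  have e: "cis \<theta> + cis (- \<theta>) - 2 = complex_of_real (2 * cos \<theta> - 2)"
    by (simp add: complex_eq_iff)
  have "\<bar>sin (\<theta> / 2)\<bar> \<le> \<bar>\<theta> / 2\<bar>" by (rule abs_sin_x_le_abs_x)
  then have "(sin (\<theta> / 2))\<^sup>2 \<le> (\<theta> / 2)\<^sup>2" by (metis abs_le_square_iff)
  then have "\<bar>2 * cos \<theta> - 2\<bar> \<le> \<theta>\<^sup>2"
    using cos_double_sin[of "\<theta> / 2"] by (simp add: power_divide)
  then show ?thesis unfolding e by (simp only: norm_of_real)
qed

lemma cis_shift_diff_le: "norm (cis ((c + u) * L) - cis (c * L)) \<le> \<bar>u\<bar> * \<bar>L\<bar>"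
proof -
  have "cis ((c + u) * L) - cis (c * L) = cis (c * L) * (cis (u * L) - 1)"
    by (simp add: distrib_right cis_add algebra_simps)
  then have "norm (cis ((c + u) * L) - cis (c * L)) = norm (cis (u * L) - 1)" by (simp add: norm_mult)
  also have "\<dots> \<le> \<bar>u * L\<bar>" by (rule norm_cis_minus_1_le)
  finally show ?thesis by (simp add: abs_mult)
qed

lemma cis_shift_second_difference_le:
  "norm (cis ((c + u) * L) + cis ((c - u) * L) - 2 * cis (c * L)) \<le> u\<^sup>2 * L\<^sup>2"
proof -
  have "cis ((c + u) * L) + cis ((c - u) * L) - 2 * cis (c * L) = cis (c * L) * (cis (u * L) + cis (- (u * L)) - 2)"
    by (simp add: algebra_simps cis_add[symmetric])
  then have "norm (cis ((c + u) * L) + cis ((c - u) * L) - 2 * cis (c * L)) = norm (cis (u * L) + cis (- (u * L)) - 2)"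
    by (simp add: norm_mult)
  also have "\<dots> \<le> (u * L)\<^sup>2" by (rule norm_cis_second_difference_le)
  finally show ?thesis by (simp add: power_mult_distrib)
qed

text \<open>Why the Duhamel defect of the real part is of second order in time: for an imaginary
  coefficient and Hermitian data the first-order terms of \<open>e\<^sup>i\<^sup>\<theta>\<close> and its conjugate cancel.\<close>

lemma norm_twisted_hermitian_pair_le:
  fixes \<kappa> g :: complex
  assumes "cnj \<kappa> = - \<kappa>"
  shows "norm (cis \<theta> * (\<kappa> * g) + cnj (cis \<theta> * (\<kappa> * cnj g))) \<le> 2 * \<bar>\<theta>\<bar> * (norm \<kappa> * norm g)"
proof -
  have "cis \<theta> * (\<kappa> * g) + cnj (cis \<theta> * (\<kappa> * cnj g)) = \<kappa> * g * (cis \<theta> - cis (- \<theta>))"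
    using assms by (simp add: cis_cnj algebra_simps)
  then show ?thesis
    using norm_cis_minus_cis_neg_le[of \<theta>] by (simp add: norm_mult mult_left_mono mult.commute)
qed

lemma phiT_cis: "phiT a b t z l = cis (t * jbr a b l) * z l"
  unfolding phiT_def by (simp add: cis_conv_exp)

lemma re_part_phiT:
  "re_part (phiT a b \<sigma> z) k = (cis (\<sigma> * jbr a b k) * z k + cnj (cis (\<sigma> * jbr a b k) * z (- k))) / 2"
  unfolding re_part_def phiT_cis by (simp add: jbr_neg)

section \<open>The local error of the Strang splitting\<close>

lemma twisted_solution_derivative:
  assumes sol: "is_solution a b p eps T psi" and sub: "{t0..t1} \<subseteq> {0..T}" and r: "r \<in> {t0..t1}"
  shows "((\<lambda>r. cis (r * (- jbr a b l) + c) * psi r l) has_vector_derivative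
      (cis (r * (- jbr a b l) + c) * (\<i> * complex_of_real (eps ^ p / jbr a b l) * Gnl p (psi r) l))) (at r within {t0..t1})"
proof -
  let ?L = "jbr a b l"
  have "((\<lambda>t'. psi t' l) has_vector_derivative
           (\<i> * (complex_of_real ?L * psi r l + complex_of_real (eps ^ p / ?L) * Gnl p (psi r) l))) (at r within {0..T})"
    using sol r sub unfolding is_solution_def by blast
  then have dpsi: "((\<lambda>t'. psi t' l) has_vector_derivative
           (\<i> * (complex_of_real ?L * psi r l + complex_of_real (eps ^ p / ?L) * Gnl p (psi r) l))) (at r within {t0..t1})"
    using sub by (rule has_vector_derivative_within_subset)
  have "((\<lambda>r. cis (r * (- ?L) + c) * psi r l) has_vector_derivative
      (cis (r * (- ?L) + c) * (\<i> * (complex_of_real ?L * psi r l + complex_of_real (eps ^ p / ?L) * Gnl p (psi r) l))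
       + \<i> * complex_of_real (- ?L) * cis (r * (- ?L) + c) * psi r l)) (at r within {t0..t1})"
    by (rule has_vector_derivative_mult[OF has_vector_derivative_cis_affine dpsi])
  moreover have "cis (r * (- ?L) + c) * (\<i> * (complex_of_real ?L * psi r l + complex_of_real (eps ^ p / ?L) * Gnl p (psi r) l))
       + \<i> * complex_of_real (- ?L) * cis (r * (- ?L) + c) * psi r l
     = cis (r * (- ?L) + c) * (\<i> * complex_of_real (eps ^ p / ?L) * Gnl p (psi r) l)"
    by (simp add: algebra_simps)
  ultimately show ?thesis by simp
qed

lemma re_part_duhamel_defect:
  assumes sol: "is_solution a b p eps T psi" and tn: "0 \<le> tn" and sg: "0 \<le> \<sigma>" "tn + \<sigma> \<le> T"
    and G_bound: "\<And>r k. r \<in> {0..T} \<Longrightarrow> norm (Gnl p (psi r) k) \<le> P * decay a b t k" and eps: "0 < eps"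
  shows "norm (re_part (psi (tn + \<sigma>)) k - re_part (phiT a b \<sigma> (psi tn)) k) \<le> eps ^ p * \<sigma>\<^sup>2 * P * decay a b t k"
proof -
  define L where "L = jbr a b k"
  have L0: "0 < L" unfolding L_def by (rule jbr_pos)
  have Lneg: "jbr a b (- k) = L" unfolding L_def by (rule jbr_neg)
  define c0 where "c0 = tn * L"
  define W where "W m r = cis (r * (- L) + c0) * psi r m" for m r
  define Es where "Es = cis (\<sigma> * L)"
  define \<kappa> where "\<kappa> = \<i> * complex_of_real (eps ^ p / L)"
  define \<Theta> where "\<Theta> r = Es * (W k r - W k tn) + cnj (Es * (W (- k) r - W (- k) tn))" for r
  have sub: "{tn..tn + \<sigma>} \<subseteq> {0..T}" using tn sg by auto
  have psi_twisted: "psi (tn + \<sigma>) m = Es * W m (tn + \<sigma>)" for m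
  proof -
    have "Es * cis ((tn + \<sigma>) * (- L) + c0) = cis (\<sigma> * L + ((tn + \<sigma>) * (- L) + c0))"
      unfolding Es_def by (simp add: cis_add)
    also have "\<sigma> * L + ((tn + \<sigma>) * (- L) + c0) = 0" unfolding c0_def by (simp add: algebra_simps)
    finally show ?thesis unfolding W_def by (simp add: mult.assoc[symmetric])
  qed
  have W_start: "W m tn = psi tn m" for m unfolding W_def c0_def by simp
  have phiT_twisted: "phiT a b \<sigma> (psi tn) k = Es * psi tn k" "phiT a b \<sigma> (psi tn) (- k) = Es * psi tn (- k)"
    unfolding phiT_cis Es_def L_def by (simp_all add: jbr_neg)
  have eq: "re_part (psi (tn + \<sigma>)) k - re_part (phiT a b \<sigma> (psi tn)) k = \<Theta> (tn + \<sigma>) / 2"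
    unfolding re_part_def \<Theta>_def phiT_twisted psi_twisted[of k] psi_twisted[of "- k"] W_start by (simp add: algebra_simps diff_divide_distrib)
  have dW: "((\<lambda>r. W m r) has_vector_derivative (cis (r * (- L) + c0) * (\<kappa> * Gnl p (psi r) m))) (at r within {tn..tn + \<sigma>})"
    if "jbr a b m = L" "r \<in> {tn..tn + \<sigma>}" for m r
    using twisted_solution_derivative[OF sol sub that(2), of m c0] unfolding W_def \<kappa>_def that(1) .
  define \<Theta>' where "\<Theta>' r = Es * (cis (r * (- L) + c0) * (\<kappa> * Gnl p (psi r) k))
      + cnj (Es * (cis (r * (- L) + c0) * (\<kappa> * Gnl p (psi r) (- k))))" for r
  have dT: "(\<Theta> has_vector_derivative \<Theta>' r) (at r within {tn..tn + \<sigma>})" if "r \<in> {tn..tn + \<sigma>}" for r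
  proof -
    have d1: "((\<lambda>r. Es * (W k r - W k tn)) has_vector_derivative Es * (cis (r * (- L) + c0) * (\<kappa> * Gnl p (psi r) k))) (at r within {tn..tn + \<sigma>})"
      using dW[of k r] that unfolding L_def by (auto intro!: derivative_eq_intros)
    have d2: "((\<lambda>r. Es * (W (- k) r - W (- k) tn)) has_vector_derivative Es * (cis (r * (- L) + c0) * (\<kappa> * Gnl p (psi r) (- k)))) (at r within {tn..tn + \<sigma>})"
      using dW[of "- k" r] that Lneg by (auto intro!: derivative_eq_intros)
    show ?thesis unfolding \<Theta>_def \<Theta>'_def
      by (intro has_vector_derivative_add d1 has_vector_derivative_cnj d2)
  qed
  have bT: "norm (\<Theta>' r) \<le> 2 * eps ^ p * \<sigma> * P * decay a b t k" if r: "r \<in> {tn..tn + \<sigma>}" for r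
  proof -
    define \<theta> where "\<theta> = \<sigma> * L + (r * (- L) + c0)"
    have "\<theta> = L * (\<sigma> + tn - r)" unfolding \<theta>_def c0_def by (simp add: algebra_simps)
    then have \<theta>: "\<bar>\<theta>\<bar> \<le> \<sigma> * L" using r L0 by (simp add: abs_mult mult.commute mult_left_mono)
    have G: "norm (Gnl p (psi r) k) \<le> P * decay a b t k" using G_bound r sub by blast
    have "\<Theta>' r = cis \<theta> * (\<kappa> * Gnl p (psi r) k) + cnj (cis \<theta> * (\<kappa> * cnj (Gnl p (psi r) k)))"
      unfolding \<Theta>'_def Gnl_herm \<theta>_def Es_def by (simp add: cis_add mult.assoc)
    also have "norm \<dots> \<le> 2 * \<bar>\<theta>\<bar> * (eps ^ p / L * norm (Gnl p (psi r) k))"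
    proof -
      have "cnj \<kappa> = - \<kappa>" "norm \<kappa> = eps ^ p / L"
        unfolding \<kappa>_def norm_mult norm_of_real using eps L0 by simp_all
      then show ?thesis using norm_twisted_hermitian_pair_le[of \<kappa> \<theta> "Gnl p (psi r) k"] by simp
    qed
    also have "\<dots> \<le> 2 * (\<sigma> * L) * (eps ^ p / L * (P * decay a b t k))"
      using \<theta> G eps L0 by (intro mult_mono mult_left_mono) auto
    also have "\<dots> = 2 * eps ^ p * \<sigma> * P * decay a b t k" using L0 by (simp add: field_simps)
    finally show ?thesis .
  qed
  have "norm (\<Theta> (tn + \<sigma>) - \<Theta> tn) \<le> (2 * eps ^ p * \<sigma> * P * decay a b t k) * (tn + \<sigma> - tn)"
    by (rule norm_diff_le_of_vector_derivative[OF _ dT bT]) (use sg in auto)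
  moreover have "\<Theta> tn = 0" unfolding \<Theta>_def by simp
  ultimately have "norm (\<Theta> (tn + \<sigma>)) \<le> 2 * eps ^ p * \<sigma>\<^sup>2 * P * decay a b t k"
    by (simp add: power2_eq_square mult_ac)
  then show ?thesis unfolding eq by (simp add: norm_divide)
qed

definition duhamel_const :: "real \<Rightarrow> real \<Rightarrow> real \<Rightarrow> real \<Rightarrow> nat \<Rightarrow> real" where
  "duhamel_const a b t \<alpha> p = (\<alpha> * decay_const a b t) ^ (p + 1) * pow_lip_const \<alpha> (decay_const a b t) (p + 1)"

lemma duhamel_const_nonneg: "0 \<le> \<alpha> \<Longrightarrow> 0 \<le> duhamel_const a b t \<alpha> p"
  unfolding duhamel_const_def using decay_const_nonneg pow_lip_const_nonneg[OF _ decay_const_nonneg] by simp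

lemma Gnl_duhamel_defect:
  assumes ab: "a < b" and t: "2 \<le> t" and al: "0 \<le> \<alpha>"
    and sol: "is_solution a b p eps T psi" and eps: "0 < eps"
    and tn: "0 \<le> tn" and \<sigma>: "0 \<le> \<sigma>" "tn + \<sigma> \<le> T"
    and bound: "\<And>r k. r \<in> {0..T} \<Longrightarrow> norm (psi r k) \<le> \<alpha> * decay a b t k"
  shows "norm (Gnl p (psi (tn + \<sigma>)) l - Gnl p (phiT a b \<sigma> (psi tn)) l)
    \<le> eps ^ p * \<sigma>\<^sup>2 * duhamel_const a b t \<alpha> p * decay a b t l"
proof -
  let ?P = "(\<alpha> * decay_const a b t) ^ (p + 1)"
  have G: "norm (Gnl p (psi r) k) \<le> ?P * decay a b t k" if "r \<in> {0..T}" for r k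
    unfolding Gnl_def by (rule conv_pow_decay[OF ab t al]) (rule re_part_decay, rule bound[OF that])
  have e0: "0 \<le> eps ^ p * \<sigma>\<^sup>2 * ?P" using eps al decay_const_nonneg by simp
  have "norm (re_part (psi (tn + \<sigma>)) k) \<le> \<alpha> * decay a b t k" for k
    by (rule re_part_decay, rule bound) (use tn \<sigma> in auto)
  moreover have "norm (re_part (phiT a b \<sigma> (psi tn)) k) \<le> \<alpha> * decay a b t k" for k
    by (rule re_part_decay) (use tn \<sigma> in \<open>simp add: phiT_cis norm_mult bound\<close>)
  moreover have "norm (re_part (psi (tn + \<sigma>)) k - re_part (phiT a b \<sigma> (psi tn)) k)
      \<le> (eps ^ p * \<sigma>\<^sup>2 * ?P) * decay a b t k" for k
    by (rule re_part_duhamel_defect[OF sol tn \<sigma> G eps])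
  ultimately have "norm (conv_pow (re_part (psi (tn + \<sigma>))) (p + 1) l - conv_pow (re_part (phiT a b \<sigma> (psi tn))) (p + 1) l)
      \<le> (eps ^ p * \<sigma>\<^sup>2 * ?P) * pow_lip_const \<alpha> (decay_const a b t) (p + 1) * decay a b t l"
    by (rule conv_pow_lipschitz_decay[OF ab t al e0])
  then show ?thesis unfolding Gnl_def duhamel_const_def by (simp only: mult.assoc)
qed

definition sym_majorant :: "coeffs \<Rightarrow> int \<Rightarrow> ennreal" where
  "sym_majorant z k = ennreal (norm (z k) + norm (z (- k)))"

lemma re_part_phiT_majorants:
  fixes a b :: real and z :: coeffs
  defines "R \<equiv> \<lambda>\<sigma>. re_part (phiT a b \<sigma> z)"
  shows "ennreal (norm (R \<sigma> k)) \<le> sym_majorant z k"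
    and "ennreal (norm (R (c + v) k - R c k)) \<le> ennreal \<bar>v\<bar> * jweight a b 1 (sym_majorant z) k"
    and "ennreal (norm (R (c + u) k + R (c - u) k - 2 * R c k))
      \<le> (ennreal \<bar>u\<bar>)\<^sup>2 * jweight a b 2 (sym_majorant z) k"
proof -
  let ?L = "jbr a b k"
  have combo: "ennreal (norm ((D * z k + cnj (D * z (- k))) / 2)) \<le> ennreal (norm D) * sym_majorant z k" for D
  proof -
    have "norm ((D * z k + cnj (D * z (- k))) / 2) \<le> norm (D * z k + cnj (D * z (- k)))"
      by (simp add: norm_divide)
    also have "\<dots> \<le> norm (D * z k) + norm (cnj (D * z (- k)))"
      by (rule norm_triangle_ineq)
    also have "\<dots> = norm D * (norm (z k) + norm (z (- k)))" by (simp add: norm_mult distrib_left)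
    finally have "ennreal (norm ((D * z k + cnj (D * z (- k))) / 2)) \<le> ennreal (norm D * (norm (z k) + norm (z (- k))))"
      by (rule ennreal_leI)
    then show ?thesis unfolding sym_majorant_def by (simp add: ennreal_mult)
  qed
  have R: "R \<sigma> k = (cis (\<sigma> * ?L) * z k + cnj (cis (\<sigma> * ?L) * z (- k))) / 2" for \<sigma>
    unfolding R_def by (rule re_part_phiT)
  show "ennreal (norm (R \<sigma> k)) \<le> sym_majorant z k"
    using combo[of "cis (\<sigma> * ?L)"] unfolding R by simp
  let ?D1 = "cis ((c + v) * ?L) - cis (c * ?L)"
  have "R (c + v) k - R c k = (?D1 * z k + cnj (?D1 * z (- k))) / 2"
    unfolding R by (simp add: algebra_simps diff_divide_distrib)
  then have "ennreal (norm (R (c + v) k - R c k)) \<le> ennreal (norm ?D1) * sym_majorant z k"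
    by (simp only: combo)
  also have "\<dots> \<le> (ennreal \<bar>v\<bar> * ennreal ?L) * sym_majorant z k"
    using cis_shift_diff_le[of c v ?L] jbr_pos[of a b k]
    by (intro mult_right_mono ennreal_le_mult_of_le) auto
  finally show "ennreal (norm (R (c + v) k - R c k)) \<le> ennreal \<bar>v\<bar> * jweight a b 1 (sym_majorant z) k"
    unfolding jweight_1 by (simp only: mult.assoc)
  let ?D2 = "cis ((c + u) * ?L) + cis ((c - u) * ?L) - 2 * cis (c * ?L)"
  have "R (c + u) k + R (c - u) k - 2 * R c k = (?D2 * z k + cnj (?D2 * z (- k))) / 2"
    unfolding R by (simp add: algebra_simps add_divide_distrib diff_divide_distrib)
  then have "ennreal (norm (R (c + u) k + R (c - u) k - 2 * R c k)) \<le> ennreal (norm ?D2) * sym_majorant z k"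
    by (simp only: combo)
  also have "\<dots> \<le> ((ennreal \<bar>u\<bar>)\<^sup>2 * ennreal (?L\<^sup>2)) * sym_majorant z k"
    using cis_shift_second_difference_le[of c u ?L]
    by (intro mult_right_mono) (simp_all add: ennreal_power ennreal_le_mult_of_le)
  finally show "ennreal (norm (R (c + u) k + R (c - u) k - 2 * R c k))
      \<le> (ennreal \<bar>u\<bar>)\<^sup>2 * jweight a b 2 (sym_majorant z) k"
    unfolding jweight_2 by (simp only: mult.assoc)
qed

definition midpoint_majorant :: "real \<Rightarrow> real \<Rightarrow> nat \<Rightarrow> (int \<Rightarrow> ennreal) \<Rightarrow> int \<Rightarrow> ennreal" where
  "midpoint_majorant a b p x l = jweight a b 2 (pow_maj x (p + 1)) l
     + pow_ddmaj x (jweight a b 1 x) (jweight a b 2 x) (p + 1) l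
     + 2 * jweight a b 1 (pow_dmaj x (jweight a b 1 x) (p + 1)) l"

lemma frozen_integrand_second_difference:
  fixes a b :: real and p :: nat and l :: int and z :: coeffs
  assumes fin: "\<And>m l. pow_maj (sym_majorant z) m l < \<infinity>"
  defines "H \<equiv> \<lambda>\<sigma>. cis (\<sigma> * (- jbr a b l)) * Gnl p (phiT a b \<sigma> z) l"
  shows "ennreal (norm (H (c + u) + H (c - u) - 2 * H c))
    \<le> (ennreal \<bar>u\<bar>)\<^sup>2 * midpoint_majorant a b p (sym_majorant z) l"
proof -
  let ?x = "sym_majorant z" and ?e = "ennreal \<bar>u\<bar>" and ?L = "jbr a b l"
  define R where "R \<sigma> = re_part (phiT a b \<sigma> z)" for \<sigma>
  define G where "G \<sigma> = conv_pow (R \<sigma>) (p + 1) l" for \<sigma>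
  have "\<And>\<sigma> k. ennreal (norm (R \<sigma> k)) \<le> ?x k"
    and "\<And>k. ennreal (norm (R (c + u) k - R c k)) \<le> ?e * jweight a b 1 ?x k"
    and "\<And>k. ennreal (norm (R (c - u) k - R c k)) \<le> ?e * jweight a b 1 ?x k"
    and "\<And>k. ennreal (norm (R (c + u) k + R (c - u) k - 2 * R c k)) \<le> ?e\<^sup>2 * jweight a b 2 ?x k"
    using re_part_phiT_majorants[where z = z] re_part_phiT_majorants(2)[where z = z and v = "- u"]
    unfolding R_def by simp_all
  note DP = conv_pow_difference_majorants[where R = R and e = ?e and n = "p + 1", OF this(1) this(2-4) fin]
  have G: "ennreal (norm (G c)) \<le> pow_maj ?x (p + 1) l"
    "ennreal (norm (G (c + u) - G c)) \<le> ?e * pow_dmaj ?x (jweight a b 1 ?x) (p + 1) l"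
    "ennreal (norm (G (c - u) - G c)) \<le> ?e * pow_dmaj ?x (jweight a b 1 ?x) (p + 1) l"
    "ennreal (norm (G (c + u) + G (c - u) - 2 * G c))
      \<le> ?e\<^sup>2 * pow_ddmaj ?x (jweight a b 1 ?x) (jweight a b 2 ?x) (p + 1) l"
    using DP unfolding G_def by blast+
  have E: "ennreal (norm (cis (c * - ?L))) \<le> 1"
    "ennreal (norm (cis ((c + u) * - ?L) - cis (c * - ?L))) \<le> ?e * ennreal ?L"
    "ennreal (norm (cis ((c - u) * - ?L) - cis (c * - ?L))) \<le> ?e * ennreal ?L"
    "ennreal (norm (cis ((c + u) * - ?L) + cis ((c - u) * - ?L) - 2 * cis (c * - ?L))) \<le> ?e\<^sup>2 * ennreal (?L\<^sup>2)"
    using cis_shift_diff_le[of c u "- ?L"] cis_shift_diff_le[of c "- u" "- ?L"]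
      cis_shift_second_difference_le[of c u "- ?L"]
    by (simp_all add: ennreal_power ennreal_le_mult_of_le less_imp_le[OF jbr_pos])
  have "H \<sigma> = cis (\<sigma> * - ?L) * G \<sigma>" for \<sigma>
    unfolding H_def G_def R_def Gnl_def by simp
  then have "ennreal (norm (H (c + u) + H (c - u) - 2 * H c))
      \<le> ?e\<^sup>2 * (ennreal (?L\<^sup>2) * pow_maj ?x (p + 1) l + 1 * pow_ddmaj ?x (jweight a b 1 ?x) (jweight a b 2 ?x) (p + 1) l
          + 2 * (ennreal ?L * pow_dmaj ?x (jweight a b 1 ?x) (p + 1) l))"
    by (simp only:) (rule ennreal_norm_product_second_difference_le[OF E(1) G(1) E(2,3) G(2,3) E(4) G(4)])
  also have "\<dots> = ?e\<^sup>2 * midpoint_majorant a b p ?x l"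
    unfolding midpoint_majorant_def jweight_1 jweight_2 by simp
  finally show ?thesis .
qed

lemma midpoint_rule_error:
  fixes W :: "real \<Rightarrow> 'a::real_normed_vector"
  assumes c: "0 \<le> c"
    and deriv: "\<And>r. r \<in> {t0..t0 + 2 * c} \<Longrightarrow> (W has_vector_derivative W' r) (at r within {t0..t0 + 2 * c})"
    and bound: "\<And>u. u \<in> {0..c} \<Longrightarrow> norm (W' (t0 + c + u) + W' (t0 + c - u) - 2 *\<^sub>R m) \<le> B"
  shows "norm (W (t0 + 2 * c) - W t0 - (2 * c) *\<^sub>R m) \<le> B * c"
proof -
  define \<Phi> where "\<Phi> u = W (t0 + c + u) - W (t0 + c - u) - (2 * u) *\<^sub>R m" for u
  have "(\<Phi> has_vector_derivative W' (t0 + c + u) + W' (t0 + c - u) - 2 *\<^sub>R m) (at u within {0..c})"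
    if u: "u \<in> {0..c}" for u
  proof -
    have inside: "(\<lambda>u. t0 + c + u) ` {0..c} \<subseteq> {t0..t0 + 2 * c}" "(\<lambda>u. t0 + c - u) ` {0..c} \<subseteq> {t0..t0 + 2 * c}"
      by auto
    have "((\<lambda>u. W (t0 + c + u)) has_vector_derivative 1 *\<^sub>R W' (t0 + c + u)) (at u within {0..c})"
      using u by (intro vector_diff_chain_within[unfolded o_def, where g = W]
          has_vector_derivative_within_subset[OF deriv inside(1)]) (auto intro!: derivative_eq_intros)
    moreover have "((\<lambda>u. W (t0 + c - u)) has_vector_derivative (- 1) *\<^sub>R W' (t0 + c - u)) (at u within {0..c})"
      using u by (intro vector_diff_chain_within[unfolded o_def, where g = W]
          has_vector_derivative_within_subset[OF deriv inside(2)]) (auto intro!: derivative_eq_intros)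
    ultimately show ?thesis
      unfolding \<Phi>_def by (auto intro!: derivative_eq_intros simp: algebra_simps)
  qed
  then have "norm (\<Phi> c - \<Phi> 0) \<le> B * (c - 0)"
    using bound c by (intro norm_diff_le_of_vector_derivative) auto
  then show ?thesis unfolding \<Phi>_def by (simp add: algebra_simps)
qed

lemma norm_midpoint_integrand_le:
  fixes \<kappa> :: complex and g H :: "real \<Rightarrow> complex"
  assumes "norm (H (c + u) + H (c - u) - 2 * H c) \<le> A"
    and "norm (g (c + u) - H (c + u)) \<le> \<delta>" "norm (g (c - u) - H (c - u)) \<le> \<delta>"
  shows "norm (\<kappa> * g (c + u) + \<kappa> * g (c - u) - 2 *\<^sub>R (\<kappa> * H c)) \<le> norm \<kappa> * (A + 2 * \<delta>)"
proof -
  have "\<kappa> * g (c + u) + \<kappa> * g (c - u) - 2 *\<^sub>R (\<kappa> * H c)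
      = \<kappa> * ((H (c + u) + H (c - u) - 2 * H c) + (g (c + u) - H (c + u)) + (g (c - u) - H (c - u)))"
    by (simp add: scaleR_conv_of_real algebra_simps)
  also have "norm \<dots> \<le> norm \<kappa> * (norm (H (c + u) + H (c - u) - 2 * H c)
      + norm (g (c + u) - H (c + u)) + norm (g (c - u) - H (c - u)))"
    unfolding norm_mult by (intro mult_left_mono norm_triangle_le add_mono) auto
  also have "\<dots> \<le> norm \<kappa> * (A + 2 * \<delta>)"
    using assms by (intro mult_left_mono) auto
  finally show ?thesis .
qed

lemma midpoint_error_scaling_le:
  fixes e tau L m Q :: real
  assumes e: "0 \<le> e" "e \<le> 1" and tau: "0 < tau" and L: "0 < L" and m: "0 \<le> m" and Q: "0 \<le> Q"
  shows "e / L * ((tau / 2)\<^sup>2 * m + 2 * (e * tau\<^sup>2 * Q)) * (tau / 2) \<le> e * tau ^ 3 / L * (m + Q)"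
proof -
  have "e * (tau ^ 3 * Q) \<le> tau ^ 3 * Q"
    using e tau Q by (intro mult_left_le_one_le) auto
  moreover have "(tau / 2)\<^sup>2 * m * (tau / 2) = tau ^ 3 * m / 8" "2 * (e * tau\<^sup>2 * Q) * (tau / 2) = e * (tau ^ 3 * Q)"
    by (simp_all add: power2_eq_square power3_eq_cube)
  moreover have "0 \<le> tau ^ 3 * m" using tau m by simp
  ultimately have "(tau / 2)\<^sup>2 * m * (tau / 2) + 2 * (e * tau\<^sup>2 * Q) * (tau / 2) \<le> tau ^ 3 * (m + Q)"
    unfolding distrib_left by linarith
  then have "e / L * ((tau / 2)\<^sup>2 * m * (tau / 2) + 2 * (e * tau\<^sup>2 * Q) * (tau / 2)) \<le> e / L * (tau ^ 3 * (m + Q))"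
    using e L by (intro mult_left_mono) auto
  then show ?thesis by (simp add: algebra_simps add_divide_distrib)
qed

lemma strang_error_eq_quadrature_defect:
  fixes a b eps tn :: real and p :: nat and l :: int and psi :: "real \<Rightarrow> coeffs"
  defines "L \<equiv> jbr a b l"
  defines "W \<equiv> \<lambda>r. cis (r * - L + tn * L) * psi r l"
    and "\<kappa> \<equiv> \<i> * complex_of_real (eps ^ p / L)"
  shows "strang a b p eps tau (psi tn) l - psi (tn + tau) l
    = - cis (tau * L) * (W (tn + tau) - W tn
        - tau *\<^sub>R (\<kappa> * (cis (tau / 2 * - L) * Gnl p (phiT a b (tau / 2) (psi tn)) l)))"
proof -
  have L: "L \<noteq> 0" unfolding L_def by (rule jbr_neq0)
  have "cis (tau * L) * W (tn + tau) = psi (tn + tau) l" "W tn = psi tn l"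
    unfolding W_def by (simp_all add: mult.assoc[symmetric] cis_mult algebra_simps)
  moreover have "cis (tau * L) * cis (tau / 2 * - L) = cis (tau / 2 * L)"
    by (simp add: cis_mult algebra_simps)
  moreover have "strang a b p eps tau (psi tn) l = cis (tau * L) * psi tn l
      + cis (tau / 2 * L) * (complex_of_real (eps ^ p * tau) * (\<i> * Gnl p (phiT a b (tau / 2) (psi tn)) l / L))"
    unfolding strang_def phiV_def Fnl_def L_def by (simp add: phiT_cis cis_mult algebra_simps)
  ultimately show ?thesis
    unfolding \<kappa>_def scaleR_conv_of_real using L by (simp add: field_simps)
qed

lemma strang_local_error_coeff:
  fixes psi :: "real \<Rightarrow> coeffs"
  assumes ab: "a < b" and t: "2 \<le> t" and al: "0 \<le> \<alpha>"
    and sol: "is_solution a b p eps T psi" and eps: "0 < eps" "eps \<le> 1"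
    and tn: "0 \<le> tn" and tau: "0 < tau" "tn + tau \<le> T"
    and bound: "\<And>r k. r \<in> {0..T} \<Longrightarrow> norm (psi r k) \<le> \<alpha> * decay a b t k"
    and fin: "\<And>m l. pow_maj (sym_majorant (psi tn)) m l < \<infinity>"
    and M_fin: "midpoint_majorant a b p (sym_majorant (psi tn)) l < \<infinity>"
  shows "norm (strang a b p eps tau (psi tn) l - psi (tn + tau) l)
    \<le> eps ^ p * tau ^ 3 / jbr a b l
       * (enn2real (midpoint_majorant a b p (sym_majorant (psi tn)) l) + duhamel_const a b t \<alpha> p * decay a b t l)"
proof -
  define L where "L = jbr a b l"
  have L0: "0 < L" unfolding L_def by (rule jbr_pos)
  define \<kappa> where "\<kappa> = \<i> * complex_of_real (eps ^ p / L)"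
  define m where "m = enn2real (midpoint_majorant a b p (sym_majorant (psi tn)) l)"
  have m: "midpoint_majorant a b p (sym_majorant (psi tn)) l = ennreal m" "0 \<le> m"
    unfolding m_def using M_fin by auto
  define Q where "Q = duhamel_const a b t \<alpha> p * decay a b t l"
  have Q0: "0 \<le> Q" unfolding Q_def using duhamel_const_nonneg[OF al] decay_nonneg by simp
  define c where "c = tau / 2"
  define H where "H \<sigma> = cis (\<sigma> * - L) * Gnl p (phiT a b \<sigma> (psi tn)) l" for \<sigma>
  define W where "W r = cis (r * - L + tn * L) * psi r l" for r
  define W' where "W' r = cis (r * - L + tn * L) * (\<kappa> * Gnl p (psi r) l)" for r
  have "(W has_vector_derivative W' r) (at r within {tn..tn + 2 * c})" if "r \<in> {tn..tn + 2 * c}" for r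
    unfolding W_def W'_def \<kappa>_def L_def
    by (rule twisted_solution_derivative[OF sol _ that]) (use tn tau in \<open>auto simp: c_def\<close>)
  moreover have "norm (W' (tn + c + u) + W' (tn + c - u) - 2 *\<^sub>R (\<kappa> * H c))
      \<le> eps ^ p / L * (c\<^sup>2 * m + 2 * (eps ^ p * tau\<^sup>2 * Q))" if u: "u \<in> {0..c}" for u
  proof -
    define g where "g \<sigma> = cis (\<sigma> * - L) * Gnl p (psi (tn + \<sigma>)) l" for \<sigma>
    have defect: "norm (g \<sigma> - H \<sigma>) \<le> eps ^ p * tau\<^sup>2 * Q" if "\<sigma> \<in> {0..tau}" for \<sigma>
    proof -
      have "norm (g \<sigma> - H \<sigma>) = norm (Gnl p (psi (tn + \<sigma>)) l - Gnl p (phiT a b \<sigma> (psi tn)) l)"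
        unfolding g_def H_def by (simp add: norm_mult flip: right_diff_distrib)
      also have "\<dots> \<le> eps ^ p * \<sigma>\<^sup>2 * Q"
        unfolding Q_def using Gnl_duhamel_defect[OF ab t al sol eps(1) tn _ _ bound] that tau
        by (simp add: mult.assoc)
      also have "\<dots> \<le> eps ^ p * tau\<^sup>2 * Q"
        using that eps Q0 by (intro mult_right_mono mult_left_mono power_mono) auto
      finally show ?thesis .
    qed
    have "ennreal (norm (H (c + u) + H (c - u) - 2 * H c)) \<le> (ennreal \<bar>u\<bar>)\<^sup>2 * ennreal m"
      unfolding H_def L_def m(1)[symmetric] by (rule frozen_integrand_second_difference[OF fin])
    then have "norm (H (c + u) + H (c - u) - 2 * H c) \<le> u\<^sup>2 * m"
      using m(2) by (simp add: ennreal_power ennreal_mult[symmetric] ennreal_le_iff del: ennreal_mult)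
    also have "\<dots> \<le> c\<^sup>2 * m"
      using u m(2) by (intro mult_right_mono power_mono) auto
    finally have second: "norm (H (c + u) + H (c - u) - 2 * H c) \<le> c\<^sup>2 * m" .
    have "W' (tn + c + u) = \<kappa> * g (c + u)" "W' (tn + c - u) = \<kappa> * g (c - u)"
      unfolding W'_def g_def by (simp_all add: algebra_simps)
    then have "norm (W' (tn + c + u) + W' (tn + c - u) - 2 *\<^sub>R (\<kappa> * H c)) \<le> norm \<kappa> * (c\<^sup>2 * m + 2 * (eps ^ p * tau\<^sup>2 * Q))"
      using u by (simp only:) (intro norm_midpoint_integrand_le second defect; simp add: c_def)
    also have "norm \<kappa> = eps ^ p / L" unfolding \<kappa>_def norm_mult norm_of_real using eps L0 by simp
    finally show ?thesis .
  qed
  ultimately have "norm (W (tn + 2 * c) - W tn - (2 * c) *\<^sub>R (\<kappa> * H c))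
      \<le> eps ^ p / L * (c\<^sup>2 * m + 2 * (eps ^ p * tau\<^sup>2 * Q)) * c"
    using tau by (intro midpoint_rule_error) (auto simp: c_def)
  moreover have "norm (strang a b p eps tau (psi tn) l - psi (tn + tau) l)
      = norm (W (tn + 2 * c) - W tn - (2 * c) *\<^sub>R (\<kappa> * H c))"
    unfolding strang_error_eq_quadrature_defect W_def H_def \<kappa>_def L_def c_def by (simp add: norm_mult)
  moreover have "eps ^ p / L * (c\<^sup>2 * m + 2 * (eps ^ p * tau\<^sup>2 * Q)) * c \<le> eps ^ p * tau ^ 3 / L * (m + Q)"
    unfolding c_def using eps tau L0 m(2) Q0 by (intro midpoint_error_scaling_le) (auto simp: power_le_one)
  ultimately show ?thesis unfolding L_def m_def Q_def by linarith
qed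

section \<open>From coefficient bounds to Sobolev norms\<close>

lemma one_plus_mu_sq_powr: "(1 + (mu a b k)\<^sup>2) powr r = (jbr a b k powr r)\<^sup>2"
proof -
  have "1 + (mu a b k)\<^sup>2 = jbr a b k * jbr a b k" using jbr_sq[of a b k] by (simp add: power2_eq_square)
  then have "(1 + (mu a b k)\<^sup>2) powr r = jbr a b k powr r * jbr a b k powr r"
    by (simp add: powr_mult less_imp_le[OF jbr_pos])
  then show ?thesis by (simp add: power2_eq_square)
qed

lemma hs_sq_eq_sob_sq: "hs_sq a b r z = sob_sq a b r (\<lambda>k. ennreal (norm (z k)))"
  unfolding hs_sq_def sob_sq_def jweight_def infsum_eq_esum
  by (intro arg_cong[where f=esum] ext)
    (simp add: one_plus_mu_sq_powr ennreal_mult[symmetric] ennreal_power power_mult_distrib del: ennreal_mult)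

lemma coeff_decay_of_hs_sq:
  assumes "hs_sq a b t z \<le> ennreal (K\<^sup>2)"
  shows "norm (z k) \<le> \<bar>K\<bar> * decay a b t k"
proof -
  have "(jweight a b t (\<lambda>k. ennreal (norm (z k))) k)\<^sup>2 \<le> ennreal (K\<^sup>2)"
    using jweight_sq_le_sob_sq[of a b t "\<lambda>k. ennreal (norm (z k))" k] assms unfolding hs_sq_eq_sob_sq by simp
  then have "(jbr a b k powr t * norm (z k))\<^sup>2 \<le> K\<^sup>2"
    unfolding jweight_def by (simp add: ennreal_mult[symmetric] ennreal_power ennreal_le_iff del: ennreal_mult)
  then have "\<bar>jbr a b k powr t * norm (z k)\<bar> \<le> \<bar>K\<bar>"
    by (simp only: abs_le_square_iff)
  then have "jbr a b k powr t * norm (z k) \<le> \<bar>K\<bar>" by simp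
  moreover have "0 < jbr a b k powr t" using jbr_pos[of a b k] by simp
  ultimately have "norm (z k) \<le> \<bar>K\<bar> / jbr a b k powr t"
    by (simp add: pos_le_divide_eq mult.commute)
  then show ?thesis unfolding decay_def powr_minus by (simp only: divide_inverse)
qed

lemma sob_sq_sym_majorant_le: "sob_sq a b r (sym_majorant z) \<le> 4 * hs_sq a b r z"
proof -
  have "sob_sq a b r (sym_majorant z) = sob_sq a b r (\<lambda>k. ennreal (norm (z k)) + ennreal (norm (z (- k))))"
    unfolding sym_majorant_def by (simp add: ennreal_plus)
  also have "\<dots> \<le> 2 * sob_sq a b r (\<lambda>k. ennreal (norm (z k))) + 2 * sob_sq a b r (\<lambda>k. ennreal (norm (z (- k))))"
    by (rule sob_sq_add_le)
  also have "\<dots> = (2 + 2) * hs_sq a b r z"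
    unfolding hs_sq_eq_sob_sq sob_sq_reflect[of a b r "\<lambda>k. ennreal (norm (z k))"] by (simp only: distrib_right)
  finally show ?thesis by simp
qed

lemma sob_sq_midpoint_majorant_le:
  assumes "sob_sq a b (r + 2) (pow_maj x (p + 1)) \<le> M"
    and "sob_sq a b (r + 1) (pow_dmaj x (jweight a b 1 x) (p + 1)) \<le> M"
    and "sob_sq a b r (pow_ddmaj x (jweight a b 1 x) (jweight a b 2 x) (p + 1)) \<le> M"
  shows "sob_sq a b r (midpoint_majorant a b p x) \<le> 16 * M"
proof -
  let ?A = "pow_maj x (p + 1)" and ?B = "pow_dmaj x (jweight a b 1 x) (p + 1)"
    and ?C = "pow_ddmaj x (jweight a b 1 x) (jweight a b 2 x) (p + 1)"
  have "sob_sq a b r (midpoint_majorant a b p x)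
      \<le> 2 * sob_sq a b r (\<lambda>l. jweight a b 2 ?A l + ?C l) + 2 * sob_sq a b r (\<lambda>l. 2 * jweight a b 1 ?B l)"
    unfolding midpoint_majorant_def by (rule sob_sq_add_le)
  also have "\<dots> \<le> 2 * (2 * sob_sq a b r (jweight a b 2 ?A) + 2 * sob_sq a b r ?C) + 2 * (2\<^sup>2 * sob_sq a b r (jweight a b 1 ?B))"
    unfolding sob_sq_cmult by (intro add_mono mult_left_mono sob_sq_add_le) auto
  also have "\<dots> \<le> 2 * (2 * M + 2 * M) + 2 * (2\<^sup>2 * M)"
    using assms by (intro add_mono mult_left_mono) (auto simp: sob_sq_jweight add.commute)
  also have "\<dots> = 16 * M"
    by (simp add: power2_eq_square mult.assoc[symmetric] flip: distrib_right)
  finally show ?thesis .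
qed

lemma weighted_coeff_error_le:
  fixes L e m d s D :: real
  assumes L: "1 \<le> L" and e: "0 \<le> e" and m: "0 \<le> m" and d: "0 \<le> d"
    and D0: "0 \<le> D" and D: "D \<le> e / L * (m + d * L powr (- (s + 1)))"
  shows "ennreal ((L powr s * D)\<^sup>2)
    \<le> ennreal (e\<^sup>2) * (2 * (ennreal (L powr (s - 1)) * ennreal m)\<^sup>2 + 2 * (ennreal (d\<^sup>2) * ennreal (1 / L\<^sup>2)))"
proof -
  have L0: "0 < L" using L by simp
  define X where "X = L powr (s - 1) * m"
  define Y where "Y = d / L\<^sup>2"
  have Ls: "L powr s = L powr (s - 1) * L" using powr_add[of L "s - 1" 1] L0 by simp
  have LsQ: "L powr (s - 1) * (d * L powr (- (s + 1))) = Y"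
  proof -
    have "L powr (s - 1) * L powr (- (s + 1)) = L powr (- 2)" using L0 by (simp add: powr_add[symmetric])
    also have "\<dots> = 1 / L\<^sup>2" using L0 powr_realpow[OF L0, of 2] by (simp add: powr_minus_divide)
    finally show ?thesis unfolding Y_def by (simp add: mult_ac)
  qed
  have "L powr s * D \<le> L powr s * (e / L * (m + d * L powr (- (s + 1))))" using D by (intro mult_left_mono) auto
  also have "\<dots> = e * (X + Y)"
    unfolding Ls LsQ[symmetric] X_def using L0 by (simp add: field_simps)
  finally have "(L powr s * D)\<^sup>2 \<le> (e * (X + Y))\<^sup>2" using D0 by (intro power_mono) auto
  also have "\<dots> \<le> e\<^sup>2 * (2 * X\<^sup>2 + 2 * Y\<^sup>2)"
    using sum_squares_bound[of X Y] by (simp add: power_mult_distrib power2_sum mult_left_mono)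
  also have "Y\<^sup>2 \<le> d\<^sup>2 * (1 / L\<^sup>2)"
  proof -
    have "Y\<^sup>2 = d\<^sup>2 * (1 / L\<^sup>2) * (1 / L\<^sup>2)" unfolding Y_def by (simp add: power2_eq_square)
    also have "\<dots> \<le> d\<^sup>2 * (1 / L\<^sup>2)" using L by (intro mult_left_le) (auto simp: power_le_one)
    finally show ?thesis .
  qed
  finally have "(L powr s * D)\<^sup>2 \<le> e\<^sup>2 * (2 * X\<^sup>2 + 2 * (d\<^sup>2 * (1 / L\<^sup>2)))"
    by (simp add: mult_left_mono)
  then have "ennreal ((L powr s * D)\<^sup>2) \<le> ennreal (e\<^sup>2 * (2 * X\<^sup>2 + 2 * (d\<^sup>2 * (1 / L\<^sup>2))))"
    by (rule ennreal_leI)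
  also have "\<dots> = ennreal (e\<^sup>2) * (2 * (ennreal (L powr (s - 1)) * ennreal m)\<^sup>2 + 2 * (ennreal (d\<^sup>2) * ennreal (1 / L\<^sup>2)))"
  proof -
    have "ennreal (d\<^sup>2 * (1 / L\<^sup>2)) = ennreal (d\<^sup>2) * ennreal (1 / L\<^sup>2)" by (rule ennreal_mult) auto
    moreover have "ennreal (2 * (d\<^sup>2 * (1 / L\<^sup>2))) = ennreal 2 * ennreal (d\<^sup>2 * (1 / L\<^sup>2))" by (rule ennreal_mult) auto
    ultimately have "ennreal (2 * d\<^sup>2 / L\<^sup>2) = 2 * (ennreal (d\<^sup>2) * ennreal (1 / L\<^sup>2))" by simp
    then show ?thesis unfolding X_def using m L0
      by (simp add: ennreal_mult ennreal_plus ennreal_power[symmetric] power_mult_distrib del: ennreal_power)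
  qed
  finally show ?thesis .
qed

lemma hs_sq_le_of_coeff_bound:
  assumes e: "0 \<le> e" and d: "0 \<le> Q" and M: "\<And>l. M l < \<infinity>"
    and bound: "\<And>l. norm (z l) \<le> e / jbr a b l * (enn2real (M l) + Q * decay a b (s + 1) l)"
  shows "hs_sq a b s z \<le> ennreal (e\<^sup>2) * (2 * sob_sq a b (s - 1) M + 2 * (ennreal (Q\<^sup>2) * jsum a b))"
proof -
  have "(jweight a b s (\<lambda>l. ennreal (norm (z l))) l)\<^sup>2
      \<le> ennreal (e\<^sup>2) * (2 * (jweight a b (s - 1) M l)\<^sup>2 + 2 * (ennreal (Q\<^sup>2) * ennreal (1 / (jbr a b l)\<^sup>2)))" for l
  proof -
    have "ennreal ((jbr a b l powr s * norm (z l))\<^sup>2)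
        \<le> ennreal (e\<^sup>2) * (2 * (ennreal (jbr a b l powr (s - 1)) * ennreal (enn2real (M l)))\<^sup>2
          + 2 * (ennreal (Q\<^sup>2) * ennreal (1 / (jbr a b l)\<^sup>2)))"
      using bound[of l] e d by (intro weighted_coeff_error_le jbr_ge1) (auto simp: decay_def)
    moreover have "(jweight a b s (\<lambda>l. ennreal (norm (z l))) l)\<^sup>2 = ennreal ((jbr a b l powr s * norm (z l))\<^sup>2)"
      unfolding jweight_def by (simp add: ennreal_mult[symmetric] ennreal_power del: ennreal_mult)
    moreover have "jweight a b (s - 1) M l = ennreal (jbr a b l powr (s - 1)) * ennreal (enn2real (M l))"
      using M[of l] unfolding jweight_def by simp
    ultimately show ?thesis by (simp only:)
  qed
  then have "hs_sq a b s z \<le> esum (\<lambda>l. ennreal (e\<^sup>2) * (2 * (jweight a b (s - 1) M l)\<^sup>2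
      + 2 * (ennreal (Q\<^sup>2) * ennreal (1 / (jbr a b l)\<^sup>2))))"
    unfolding hs_sq_eq_sob_sq sob_sq_def by (rule esum_mono)
  also have "\<dots> = ennreal (e\<^sup>2) * (2 * sob_sq a b (s - 1) M + 2 * (ennreal (Q\<^sup>2) * jsum a b))"
    unfolding sob_sq_def jsum_def by (simp add: esum_cmult esum_add)
  finally show ?thesis .
qed

lemma strang_local_error_uniform:
  assumes ab: "a < b" and s: "1 \<le> s"
  shows "\<exists>C<\<infinity>. \<forall>eps T (psi :: real \<Rightarrow> coeffs) tau tn.
     0 < eps \<and> eps \<le> 1 \<and> is_solution a b p eps T psi \<and>
     (\<forall>t\<in>{0..T}. hs_sq a b (s + 1) (psi t) \<le> ennreal (K\<^sup>2)) \<and> 0 < tau \<and> 0 \<le> tn \<and> tn + tau \<le> T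
     \<longrightarrow> hs_sq a b s (\<lambda>l. strang a b p eps tau (psi tn) l - psi (tn + tau) l)
         \<le> ennreal ((eps ^ p * tau ^ 3)\<^sup>2) * C"
proof -
  define K4 where "K4 = ennreal (4 * K\<^sup>2)"
  have bounded: "\<exists>M<\<infinity>. \<forall>x. sob_sq a b (s + 1) x \<le> K4 \<longrightarrow>
      sob_sq a b (s + 1) (pow_maj x n) \<le> M \<and> sob_sq a b s (pow_dmaj x (jweight a b 1 x) n) \<le> M \<and>
      sob_sq a b (s - 1) (pow_ddmaj x (jweight a b 1 x) (jweight a b 2 x) n) \<le> M" for n
    by (rule sob_sq_pow_majorants_bounded[OF ab s]) (simp add: K4_def)
  obtain Mq where Mq: "Mq < \<infinity>" and HMq: "\<And>x. sob_sq a b (s + 1) x \<le> K4 \<Longrightarrow>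
      sob_sq a b (s + 1) (pow_maj x (p + 1)) \<le> Mq \<and> sob_sq a b s (pow_dmaj x (jweight a b 1 x) (p + 1)) \<le> Mq \<and>
      sob_sq a b (s - 1) (pow_ddmaj x (jweight a b 1 x) (jweight a b 2 x) (p + 1)) \<le> Mq"
    using bounded[of "p + 1"] by blast
  define Q where "Q = duhamel_const a b (s + 1) \<bar>K\<bar> p"
  have Q0: "0 \<le> Q" unfolding Q_def by (simp add: duhamel_const_nonneg)
  define C where "C = 2 * (16 * Mq) + 2 * (ennreal (Q\<^sup>2) * jsum a b)"
  have "C < \<infinity>"
    unfolding C_def using Mq jsum_finite[OF ab] unfolding jsum_def by (simp add: ennreal_mult_less_top)
  moreover have "hs_sq a b s (\<lambda>l. strang a b p eps tau (psi tn) l - psi (tn + tau) l)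
      \<le> ennreal ((eps ^ p * tau ^ 3)\<^sup>2) * C"
    if eps: "0 < eps" "eps \<le> 1" and sol: "is_solution a b p eps T psi"
      and hs: "\<forall>t\<in>{0..T}. hs_sq a b (s + 1) (psi t) \<le> ennreal (K\<^sup>2)"
      and tau: "0 < tau" "tn + tau \<le> T" and tn: "0 \<le> tn"
    for eps T tau tn and psi :: "real \<Rightarrow> coeffs"
  proof -
    let ?x = "sym_majorant (psi tn)"
    have "tn \<in> {0..T}" using tn tau by auto
    have "sob_sq a b (s + 1) ?x \<le> 4 * hs_sq a b (s + 1) (psi tn)" by (rule sob_sq_sym_majorant_le)
    also have "\<dots> \<le> 4 * ennreal (K\<^sup>2)" using hs \<open>tn \<in> {0..T}\<close> by (intro mult_left_mono) auto
    finally have xK: "sob_sq a b (s + 1) ?x \<le> K4" unfolding K4_def by (simp add: ennreal_mult)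
    have fin: "pow_maj ?x m l < \<infinity>" for m l
      using xK by (intro pow_maj_finite[OF ab s]) (simp add: K4_def le_less_trans)
    have MQ: "sob_sq a b (s - 1) (midpoint_majorant a b p ?x) \<le> 16 * Mq"
      using HMq[OF xK] by (intro sob_sq_midpoint_majorant_le) (simp_all del: pow_maj.simps pow_dmaj.simps pow_ddmaj.simps add: add.commute)
    have Mfin: "midpoint_majorant a b p ?x l < \<infinity>" for l
    proof (rule finite_of_sob_sq_finite)
      show "sob_sq a b (s - 1) (midpoint_majorant a b p ?x) < \<infinity>"
        using MQ Mq by (simp add: ennreal_mult_less_top le_less_trans)
    qed (use s in simp)
    have bound: "norm (psi r k) \<le> \<bar>K\<bar> * decay a b (s + 1) k" if "r \<in> {0..T}" for r k
      using hs that by (intro coeff_decay_of_hs_sq) blast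
    have "norm (strang a b p eps tau (psi tn) l - psi (tn + tau) l)
        \<le> eps ^ p * tau ^ 3 / jbr a b l * (enn2real (midpoint_majorant a b p ?x l) + Q * decay a b (s + 1) l)" for l
      unfolding Q_def by (rule strang_local_error_coeff[OF ab _ _ sol eps tn tau bound fin Mfin]) (use s in auto)
    then have "hs_sq a b s (\<lambda>l. strang a b p eps tau (psi tn) l - psi (tn + tau) l)
        \<le> ennreal ((eps ^ p * tau ^ 3)\<^sup>2) * (2 * sob_sq a b (s - 1) (midpoint_majorant a b p ?x) + 2 * (ennreal (Q\<^sup>2) * jsum a b))"
      using eps tau Q0 Mfin by (intro hs_sq_le_of_coeff_bound) auto
    also have "\<dots> \<le> ennreal ((eps ^ p * tau ^ 3)\<^sup>2) * C"
      unfolding C_def using MQ by (intro mult_left_mono add_mono) auto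
    finally show ?thesis .
  qed
  ultimately show ?thesis by blast
qed

theorem lemma3p3:
  fixes a b :: real and p :: nat and s :: real and K :: real
  assumes "a < b" and "p \<ge> 1" and "s \<ge> 1"
  shows "\<exists>M0::real. \<forall>eps T (psi :: real \<Rightarrow> int \<Rightarrow> complex) tau tn.
     0 < eps \<and> eps \<le> 1 \<and> 0 < T \<and>
     is_solution a b p eps T psi \<and>
     (\<forall>t\<in>{0..T}. hs_sq a b (s + 1) (psi t) \<le> ennreal (K\<^sup>2)) \<and>
     0 < tau \<and> tau \<le> 1 / eps ^ p \<and> 0 \<le> tn \<and> tn + tau \<le> T
     \<longrightarrow> hs_sq a b s (\<lambda>l. strang a b p eps tau (psi tn) l - psi (tn + tau) l)
           \<le> ennreal ((M0 * eps ^ p * tau ^ 3)\<^sup>2)"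
proof -
  \<comment> \<open>The bound holds for every step size.\<close>
  obtain C where C: "C < \<infinity>" and local_error: "\<forall>eps T (psi :: real \<Rightarrow> coeffs) tau tn.
     0 < eps \<and> eps \<le> 1 \<and> is_solution a b p eps T psi \<and>
     (\<forall>t\<in>{0..T}. hs_sq a b (s + 1) (psi t) \<le> ennreal (K\<^sup>2)) \<and> 0 < tau \<and> 0 \<le> tn \<and> tn + tau \<le> T
     \<longrightarrow> hs_sq a b s (\<lambda>l. strang a b p eps tau (psi tn) l - psi (tn + tau) l)
         \<le> ennreal ((eps ^ p * tau ^ 3)\<^sup>2) * C"
    using strang_local_error_uniform[OF assms(1,3)] by blast
  define M0 where "M0 = sqrt (enn2real C)"
  have "C = ennreal (M0\<^sup>2)" using C by (simp add: M0_def)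
  then have "ennreal ((eps ^ p * tau ^ 3)\<^sup>2) * C = ennreal ((M0 * eps ^ p * tau ^ 3)\<^sup>2)" for eps tau :: real
    by (simp add: ennreal_mult[symmetric] power_mult_distrib mult.commute del: ennreal_mult)
  then show ?thesis using local_error by (intro exI[of _ M0]) auto
qed

end
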